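(* Let $\mathbf Q,\widehat{\mathbf Q}\in\mathbb R^{p\times p}$, where $\mathbf Q$ has rank $r$ with singular values $\sigma_1\ge\dots\ge\sigma_r>0$, left singular vectors $\mathbf g_1,\dots,\mathbf g_r$ and right singular vectors $\mathbf h_1,\dots,\mathbf h_r$, and $\widehat{\mathbf Q}$ has singular values $\widehat\sigma_1\ge\dots\ge\widehat\sigma_p\ge0$ with corresponding right singular vectors $\widehat{\mathbf h}_1,\dots,\widehat{\mathbf h}_p$. For $1\le s\le t\le r$ let $\boldsymbol H=[\mathbf h_s,\dots,\mathbf h_t]$, $\widehat{\boldsymbol H}=[\widehat{\mathbf h}_s,\dots,\widehat{\mathbf h}_t]$, $\boldsymbol G=[\mathbf g_s,\dots,\mathbf g_t]$, $\mathbf H=[\mathbf h_1,\dots,\mathbf h_r]$, and $\Delta=\min\{\sigma_{s-1}-\sigma_s,\ \sigma_t-\sigma_{t+1},\ \sigma_t\}$ with $\sigma_0=+\infty$, $\sigma_{r+1}=0$. Suppose $\Delta>0$ and $\|\widehat{\mathbf Q}-\mathbf Q\|_2\le\Delta/2$. Then there exists an orthogonal matrix $\boldsymbol\Omega\in\mathbb R^{(t-s+1)\times(t-s+1)}$ such that for every $j=1,\dots,p$, $$\|\mathbf e_j^\top(\widehat{\boldsymbol H}\boldsymbol\Omega-\boldsymbol H)\|_2\le\frac2\Delta\|\boldsymbol G^\top(\widehat{\mathbf Q}-\mathbf Q)\mathbf e_j\|_2+\frac{4(1+\sqrt2)}{\Delta}\|\mathbf e_j^\top\mathbf H\|_2\|\widehat{\mathbf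 Q}-\mathbf Q\|_2+\frac8{\Delta^2}\|\widehat{\mathbf Q}-\mathbf Q\|_2^2.$$
   Context: $\mathbf e_j$ is the $j$-th standard basis vector of $\mathbb R^p$; $\|\cdot\|_2$ is the Euclidean norm for vectors and the spectral norm for matrices. *)

theory Defs
  imports "HOL-Analysis.Analysis"
begin

definition outer :: "real^'p \<Rightarrow> real^'p \<Rightarrow> real^'p^'p" where
  "outer g h = (\<chi> a b. g $ a * h $ b)"

definition spec_norm :: "real^'p^'p \<Rightarrow> real" where
  "spec_norm A = onorm (\<lambda>x. A *v x)"

definition orthonormal_on :: "nat set \<Rightarrow> (nat \<Rightarrow> real^'p) \<Rightarrow> bool" where
  "orthonormal_on I v \<longleftrightarrow> (\<forall>i\<in>I. \<forall>k\<in>I. v i \<bullet> v k = (if i = k then 1 else 0))"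

text \<open>Eigengap Delta = min(sigma_{s-1}-sigma_s, sigma_t-sigma_{t+1}, sigma_t),
  with sigma_0 = +infinity and sigma_{r+1} = 0.\<close>
definition gapDelta :: "(nat \<Rightarrow> real) \<Rightarrow> nat \<Rightarrow> nat \<Rightarrow> nat \<Rightarrow> real" where
  "gapDelta \<sigma> r s t =
     (let sig = (\<lambda>i. if i = r + 1 then 0 else \<sigma> i);
          m = min (sig t - sig (t + 1)) (sig t)
      in if s = 1 then m else min (sig (s - 1) - sig s) m)"

end

theory Submission
  imports Defs
begin

text \<open>
  Write \<open>E = Qh - Q\<close> and \<open>\<epsilon> = \<parallel>E\<parallel>\<close>.  By Weyl's inequality the perturbed singular values
  \<open>\<sigma>h s, ..., \<sigma>h t\<close> lie in an interval of centre \<open>\<gamma>\<close> and radius \<open>\<rho>\<close>, while every other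
  singular value of \<open>Q\<close> keeps the distance \<open>\<rho> + \<delta>\<close> from \<open>\<gamma>\<close>, where
  \<open>\<delta> = \<Delta> - \<epsilon> \<ge> \<Delta>/2\<close>.  A Davis--Kahan argument for the symmetric dilations
  [[0, Q], [Q^T, 0]] and [[0, Qh], [Qh^T, 0]] bounds the sin-theta distance between the singular
  subspaces belonging to \<open>s..t\<close> by \<open>sqrt 2 \<epsilon> / \<delta>\<close>.  The rotation \<open>\<Omega>\<close> solves the orthogonal
  Procrustes problem of maximising \<open>tr (H^T Hh \<Omega>)\<close>; optimality makes \<open>H^T Hh \<Omega>\<close> symmetric
  positive semidefinite, which turns the sin-theta bound into \<open>\<parallel>Hh \<Omega> - H\<parallel> \<le> 2 sqrt 2 \<epsilon> / \<delta>\<close>.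
  Finally \<open>x\<^sub>j = \<langle>Qh e\<^sub>j, Gh x\<rangle>\<close> for \<open>x\<close> in the span of \<open>Hh\<close>, where
  \<open>Gh = Gh_S \<Sigma>h_S^-1 Hh_S^T\<close>; splitting \<open>Qh = Q + E\<close> in this identity gives the three
  terms of the row-wise bound.\<close>

section \<open>Orthonormal families and sums of dyads\<close>

text \<open>The map of the matrix \<open>\<Sum>i\<in>I. c i u i v i^T\<close>, cf. \<open>sum_outer_mult\<close> below.\<close>
definition dyad_sum :: "nat set \<Rightarrow> (nat \<Rightarrow> real) \<Rightarrow> (nat \<Rightarrow> real^'n) \<Rightarrow> (nat \<Rightarrow> real^'n) \<Rightarrow> real^'n \<Rightarrow> real^'n" where
  "dyad_sum I c u v x = (\<Sum>i\<in>I. (c i * (v i \<bullet> x)) *\<^sub>R u i)"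

abbreviation orth_proj :: "nat set \<Rightarrow> (nat \<Rightarrow> real^'n) \<Rightarrow> real^'n \<Rightarrow> real^'n" where
  "orth_proj I v \<equiv> dyad_sum I (\<lambda>_. 1) v v"

lemma orthonormal_onD: "orthonormal_on I v \<Longrightarrow> i \<in> I \<Longrightarrow> k \<in> I \<Longrightarrow> v i \<bullet> v k = (if i = k then 1 else 0)"
  unfolding orthonormal_on_def by blast

lemma orthonormal_on_subset: "orthonormal_on I v \<Longrightarrow> J \<subseteq> I \<Longrightarrow> orthonormal_on J v"
  unfolding orthonormal_on_def by blast

lemma orthonormal_on_norm: "orthonormal_on I v \<Longrightarrow> i \<in> I \<Longrightarrow> norm (v i) = 1"
  by (simp add: norm_eq_sqrt_inner orthonormal_onD)

lemma orthonormal_on_inner_sum: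
  assumes "orthonormal_on I v" "J \<subseteq> I" "finite J" "k \<in> I"
  shows "v k \<bullet> (\<Sum>i\<in>J. c i *\<^sub>R v i) = (if k \<in> J then c k else 0)"
proof -
  have "v k \<bullet> (\<Sum>i\<in>J. c i *\<^sub>R v i) = (\<Sum>i\<in>J. if k = i then c i else 0)"
    unfolding inner_sum_right
    by (rule sum.cong) (use assms in \<open>auto simp: orthonormal_onD\<close>)
  then show ?thesis using assms(3) by simp
qed

lemma orthonormal_on_norm_sum:
  assumes "orthonormal_on I v" "finite I"
  shows "(norm (\<Sum>i\<in>I. c i *\<^sub>R v i))\<^sup>2 = (\<Sum>i\<in>I. (c i)\<^sup>2)"
proof -
  have "(norm (\<Sum>i\<in>I. c i *\<^sub>R v i))\<^sup>2 = (\<Sum>k\<in>I. c k * (v k \<bullet> (\<Sum>i\<in>I. c i *\<^sub>R v i)))"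
    by (simp add: power2_norm_eq_inner inner_sum_left)
  also have "\<dots> = (\<Sum>k\<in>I. (c k)\<^sup>2)"
    by (rule sum.cong) (simp_all add: orthonormal_on_inner_sum[OF assms(1) order_refl assms(2)] power2_eq_square)
  finally show ?thesis .
qed

lemma orthonormal_on_inj: "orthonormal_on I v \<Longrightarrow> inj_on v I"
  unfolding orthonormal_on_def inj_on_def by (metis one_neq_zero)

lemma orthonormal_on_independent:
  assumes "orthonormal_on I v"
  shows "independent (v ` I)"
proof (rule pairwise_orthogonal_independent)
  show "pairwise orthogonal (v ` I)"
    using assms unfolding orthonormal_on_def pairwise_def orthogonal_def by force
  show "0 \<notin> v ` I"
    using assms unfolding orthonormal_on_def by force
qed

lemma orthonormal_on_card_le:
  fixes v :: "nat \<Rightarrow> real^'n"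
  assumes "orthonormal_on I v"
  shows "card I \<le> CARD('n)"
  using independent_card_le[OF orthonormal_on_independent[OF assms]]
  by (simp add: card_image[OF orthonormal_on_inj[OF assms]])

lemma dyad_sum_linear: "linear (dyad_sum I c u v)"
  by (rule linearI)
     (simp_all add: dyad_sum_def inner_add_right distrib_left scaleR_add_left sum.distrib
        scaleR_sum_right mult.left_commute)

lemma dyad_sum_coeff_add:
  "dyad_sum I c u v x + dyad_sum I d u v x = dyad_sum I (\<lambda>i. c i + d i) u v x"
  by (simp add: dyad_sum_def distrib_right scaleR_add_left sum.distrib)

lemma dyad_sum_coeff_scale: "a *\<^sub>R dyad_sum I c u v x = dyad_sum I (\<lambda>i. a * c i) u v x"
  by (simp add: dyad_sum_def scaleR_sum_right mult.assoc)

lemma dyad_sum_adjoint: "dyad_sum I c u v x \<bullet> y = x \<bullet> dyad_sum I c v u y"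
  by (simp add: dyad_sum_def inner_sum_left inner_sum_right inner_commute mult_ac)

lemma inner_dyad_sum:
  assumes "orthonormal_on I u" "J \<subseteq> I" "finite J" "k \<in> I"
  shows "u k \<bullet> dyad_sum J c u v x = (if k \<in> J then c k * (v k \<bullet> x) else 0)"
  unfolding dyad_sum_def by (rule orthonormal_on_inner_sum[OF assms])

lemma norm_dyad_sum_sq:
  assumes "orthonormal_on I u" "finite I"
  shows "(norm (dyad_sum I c u v x))\<^sup>2 = (\<Sum>i\<in>I. (c i * (v i \<bullet> x))\<^sup>2)"
  unfolding dyad_sum_def by (rule orthonormal_on_norm_sum[OF assms])

lemma orth_proj_orthogonal:
  assumes "orthonormal_on I v" "finite I" "k \<in> I"
  shows "v k \<bullet> (x - orth_proj I v x) = 0"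
  using inner_dyad_sum[OF assms(1) order_refl assms(2,3)] assms(3) by (simp add: inner_diff_right)

lemma orthonormal_on_norm_sum_add:
  assumes "orthonormal_on I v" "finite I" "\<And>i. i \<in> I \<Longrightarrow> v i \<bullet> w = 0"
  shows "(norm ((\<Sum>i\<in>I. c i *\<^sub>R v i) + w))\<^sup>2 = (\<Sum>i\<in>I. (c i)\<^sup>2) + (norm w)\<^sup>2"
proof -
  have "orthogonal (\<Sum>i\<in>I. c i *\<^sub>R v i) w"
    unfolding orthogonal_def inner_sum_left by (simp add: assms(3))
  then show ?thesis by (simp add: norm_add_Pythagorean orthonormal_on_norm_sum[OF assms(1,2)])
qed

lemma orth_proj_pythagoras:
  assumes "orthonormal_on I v" "finite I"
  shows "(norm x)\<^sup>2 = (\<Sum>i\<in>I. (v i \<bullet> x)\<^sup>2) + (norm (x - orth_proj I v x))\<^sup>2"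
  using orthonormal_on_norm_sum_add[OF assms orth_proj_orthogonal[OF assms, of _ x], of "\<lambda>i. v i \<bullet> x"]
  by (simp add: dyad_sum_def)

lemma orthonormal_on_bessel:
  assumes "orthonormal_on I v" "finite I"
  shows "(\<Sum>i\<in>I. (v i \<bullet> x)\<^sup>2) \<le> (norm x)\<^sup>2"
  using orth_proj_pythagoras[OF assms, of x] by simp

lemma norm_dyad_sum_le:
  assumes "orthonormal_on I u" "orthonormal_on I v" "finite I"
    and "\<And>i. i \<in> I \<Longrightarrow> \<bar>c i\<bar> \<le> b" "0 \<le> b"
  shows "norm (dyad_sum I c u v x) \<le> b * norm x"
proof (rule power2_le_imp_le)
  have "(norm (dyad_sum I c u v x))\<^sup>2 \<le> (\<Sum>i\<in>I. b\<^sup>2 * (v i \<bullet> x)\<^sup>2)"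
    unfolding norm_dyad_sum_sq[OF assms(1,3)] power_mult_distrib
    by (intro sum_mono mult_right_mono)
       (use power_mono[OF assms(4) abs_ge_zero, of _ 2] in simp_all)
  also have "\<dots> \<le> b\<^sup>2 * (norm x)\<^sup>2"
    unfolding sum_distrib_left[symmetric] by (intro mult_left_mono orthonormal_on_bessel assms) simp
  finally show "(norm (dyad_sum I c u v x))\<^sup>2 \<le> (b * norm x)\<^sup>2" by (simp add: power_mult_distrib)
qed (use assms in simp)

lemma dyad_sum_sum:
  assumes "orthonormal_on I v" "J \<subseteq> I" "finite I"
  shows "dyad_sum I c u v (\<Sum>j\<in>J. a j *\<^sub>R v j) = (\<Sum>j\<in>J. (c j * a j) *\<^sub>R u j)"
proof -
  have J: "finite J" using assms finite_subset by blast
  have "dyad_sum I c u v (\<Sum>j\<in>J. a j *\<^sub>R v j) = (\<Sum>i\<in>I. (if i \<in> J then (c i * a i) *\<^sub>R u i else 0))"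
    unfolding dyad_sum_def by (rule sum.cong) (simp_all add: orthonormal_on_inner_sum[OF assms(1,2) J])
  also have "\<dots> = (\<Sum>j\<in>J. (c j * a j) *\<^sub>R u j)"
    using assms by (simp add: sum.If_cases Int_absorb1)
  finally show ?thesis .
qed

lemma dyad_sum_comp:
  assumes "orthonormal_on I v" "J \<subseteq> I" "finite I"
  shows "dyad_sum I c u v (dyad_sum J d v w x) = dyad_sum J (\<lambda>i. c i * d i) u w x"
  unfolding dyad_sum_def[of J] dyad_sum_sum[OF assms] by (simp add: dyad_sum_def mult.assoc)

lemma dyad_sum_basis:
  assumes "orthonormal_on I v" "finite I" "k \<in> I"
  shows "dyad_sum I c u v (v k) = c k *\<^sub>R u k"
  using dyad_sum_sum[OF assms(1) _ assms(2), of "{k}" c u "\<lambda>_. 1"] assms(3) by simp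

lemma orth_proj_idem:
  assumes "orthonormal_on I v" "finite I"
  shows "orth_proj I v (orth_proj I v x) = orth_proj I v x"
  using dyad_sum_comp[OF assms(1) order_refl assms(2)] by simp

lemma orth_proj_adjoint: "orth_proj I v x \<bullet> y = x \<bullet> orth_proj I v y"
  by (rule dyad_sum_adjoint)

lemma orth_proj_inner_self:
  assumes "orthonormal_on I v" "finite I"
  shows "orth_proj I v x \<bullet> x = (norm (orth_proj I v x))\<^sup>2"
  using norm_dyad_sum_sq[OF assms, of "\<lambda>_. 1" v x]
  by (simp add: dyad_sum_def inner_sum_left inner_sum_right power2_eq_square inner_commute)

lemma norm_orth_proj:
  assumes "orthonormal_on I v" "finite I"
  shows "norm (orth_proj I v x) = L2_set (\<lambda>i. v i \<bullet> x) I"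
  using norm_dyad_sum_sq[OF assms, of "\<lambda>_. 1" v x] by (simp add: L2_set_def real_sqrt_unique)

lemma orth_proj_best_approx:
  assumes "orthonormal_on I v" "finite I"
  shows "norm (y - orth_proj I v y) \<le> norm (y - (\<Sum>i\<in>I. c i *\<^sub>R v i))"
proof (rule power2_le_imp_le)
  have dist: "(norm (y - (\<Sum>i\<in>I. a i *\<^sub>R v i)))\<^sup>2
      = (norm y)\<^sup>2 - 2 * (\<Sum>i\<in>I. a i * (v i \<bullet> y)) + (\<Sum>i\<in>I. (a i)\<^sup>2)" for a
  proof -
    have "(norm (y - (\<Sum>i\<in>I. a i *\<^sub>R v i)))\<^sup>2
        = (norm y)\<^sup>2 - 2 * (y \<bullet> (\<Sum>i\<in>I. a i *\<^sub>R v i)) + (norm (\<Sum>i\<in>I. a i *\<^sub>R v i))\<^sup>2"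
      by (simp add: power2_norm_eq_inner inner_diff_left inner_diff_right inner_commute)
    then show ?thesis
      by (simp add: orthonormal_on_norm_sum[OF assms] inner_sum_right inner_commute)
  qed
  have "0 \<le> (\<Sum>i\<in>I. (c i - v i \<bullet> y)\<^sup>2)" by (simp add: sum_nonneg)
  also have "\<dots> = (\<Sum>i\<in>I. (c i)\<^sup>2) - 2 * (\<Sum>i\<in>I. c i * (v i \<bullet> y)) + (\<Sum>i\<in>I. (v i \<bullet> y)\<^sup>2)"
    by (simp add: power2_diff sum.distrib sum_subtractf sum_distrib_left mult_ac)
  finally show "(norm (y - orth_proj I v y))\<^sup>2 \<le> (norm (y - (\<Sum>i\<in>I. c i *\<^sub>R v i)))\<^sup>2"
    using dist[of c] dist[of "\<lambda>i. v i \<bullet> y"] by (simp add: dyad_sum_def power2_eq_square)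
qed simp

lemma orth_proj_span:
  assumes "orthonormal_on I v" "finite I" "x \<in> span (v ` I)"
  shows "orth_proj I v x = x"
proof -
  have "subspace {x. orth_proj I v x - x = 0}"
    by (intro linear_subspace_kernel linear_compose_sub dyad_sum_linear)
       (simp add: linear_id[unfolded id_def])
  moreover have "v ` I \<subseteq> {x. orth_proj I v x - x = 0}"
    using dyad_sum_basis[OF assms(1,2)] by auto
  ultimately have "span (v ` I) \<subseteq> {x. orth_proj I v x - x = 0}"
    by (rule span_minimal[rotated])
  then show ?thesis using assms(3) by auto
qed

lemma orthonormal_on_exists_orthogonal:
  fixes a b :: "nat \<Rightarrow> real^'n"
  assumes a: "orthonormal_on A a" "finite A" and b: "orthonormal_on B b" "finite B"
    and card: "card B < card A"
  obtains x where "x \<noteq> 0" "orth_proj A a x = x" "\<And>i. i \<in> B \<Longrightarrow> b i \<bullet> x = 0"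
proof -
  let ?\<phi> = "orth_proj B b"
  have "\<not> inj_on ?\<phi> (span (a ` A))"
  proof
    assume inj: "inj_on ?\<phi> (span (a ` A))"
    have "card A = dim (a ` A)"
      by (simp add: dim_eq_card_independent orthonormal_on_independent[OF a(1)]
          card_image[OF orthonormal_on_inj[OF a(1)]])
    also have "\<dots> = dim (?\<phi> ` (a ` A))" by (rule dim_image_eq[OF dyad_sum_linear inj, symmetric])
    also have "\<dots> \<le> card (b ` B)"
    proof (rule dim_le_card)
      show "?\<phi> ` (a ` A) \<subseteq> span (b ` B)"
        unfolding dyad_sum_def by (intro image_subsetI span_sum span_scale span_base) auto
    qed (use b in simp)
    also have "\<dots> \<le> card B" using b by (simp add: card_image_le)
    finally show False using card by simp
  qed
  then obtain y z where yz: "y \<in> span (a ` A)" "z \<in> span (a ` A)" "?\<phi> y = ?\<phi> z" "y \<noteq> z"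
    unfolding inj_on_def by blast
  show ?thesis
  proof
    show "y - z \<noteq> 0" using yz by simp
    show "orth_proj A a (y - z) = y - z" by (rule orth_proj_span[OF a span_diff[OF yz(1,2)]])
    fix i assume "i \<in> B"
    have "?\<phi> (y - z) = 0" by (simp add: linear_diff[OF dyad_sum_linear] yz(3))
    then show "b i \<bullet> (y - z) = 0"
      using inner_dyad_sum[OF b(1) order_refl b(2) \<open>i \<in> B\<close>, of "\<lambda>_. 1" b "y - z"] \<open>i \<in> B\<close>
      by simp
  qed
qed

section \<open>Matrices, the spectral norm and singular value decompositions\<close>

lemma le_of_sq_le_mult: "(n::real)\<^sup>2 \<le> a * n \<Longrightarrow> 0 \<le> a \<Longrightarrow> 0 \<le> n \<Longrightarrow> n \<le> a"
  by (cases "n = 0") (simp_all add: power2_eq_square)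

lemma outer_mult: "outer u v *v x = (v \<bullet> x) *\<^sub>R u"
  by (simp add: outer_def vec_eq_iff matrix_vector_mult_def inner_vec_def mult_ac sum_distrib_left)

lemma sum_outer_mult: "(\<Sum>i\<in>I. a i *\<^sub>R outer (u i) (v i)) *v x = dyad_sum I a u v x"
proof (induction I rule: infinite_finite_induct)
  case (insert i I)
  then show ?case
    by (simp add: dyad_sum_def matrix_vector_mult_add_rdistrib outer_mult
        flip: scaleR_matrix_vector_assoc)
qed (simp_all add: dyad_sum_def)

lemma outer_vector_mult: "y v* outer u v = (u \<bullet> y) *\<^sub>R v"
  by (simp add: outer_def vec_eq_iff vector_matrix_mult_def inner_vec_def mult_ac sum_distrib_left)

lemma vector_sum_outer_mult: "y v* (\<Sum>i\<in>I. a i *\<^sub>R outer (u i) (v i)) = dyad_sum I a v u y"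
proof (induction I rule: infinite_finite_induct)
  case (insert i I)
  then show ?case
    by (simp add: dyad_sum_def vector_matrix_mult_add_rdistrib outer_vector_mult vector_scaleR_matrix_ac)
qed (simp_all add: dyad_sum_def)

lemma spec_norm_nonneg: "0 \<le> spec_norm A"
  unfolding spec_norm_def by (rule onorm_pos_le[OF matrix_vector_mul_bounded_linear])

lemma norm_mult_le_spec_norm: "norm (A *v x) \<le> spec_norm A * norm x"
  unfolding spec_norm_def by (rule onorm[OF matrix_vector_mul_bounded_linear])

lemma norm_vector_mult_le_spec_norm: "norm (y v* A) \<le> spec_norm A * norm y"
proof (rule le_of_sq_le_mult)
  let ?w = "y v* A"
  have "(norm ?w)\<^sup>2 = y \<bullet> (A *v ?w)"
    by (simp add: power2_norm_eq_inner dot_lmul_matrix)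
  also have "\<dots> \<le> norm y * (spec_norm A * norm ?w)"
    by (rule order_trans[OF norm_cauchy_schwarz mult_left_mono[OF norm_mult_le_spec_norm]]) simp
  finally show "(norm ?w)\<^sup>2 \<le> (spec_norm A * norm y) * norm ?w" by (simp add: mult_ac)
qed (simp_all add: spec_norm_nonneg)

lemma spec_norm_minus_commute: "spec_norm (A - B) = spec_norm (B - A)"
proof -
  have "(\<lambda>x. (B - A) *v x) = (\<lambda>x. - ((A - B) *v x))"
    by (simp add: matrix_vector_mult_diff_rdistrib)
  then show ?thesis
    unfolding spec_norm_def by (simp add: onorm_neg)
qed

lemma norm_matrix_le_entries:
  fixes L :: "real^'n^'m"
  assumes "\<And>i j. \<bar>L $ i $ j\<bar> \<le> 1"
  shows "norm L \<le> real CARD('m) * real CARD('n)"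
proof -
  have "norm L \<le> (\<Sum>i\<in>UNIV. norm (L $ i))"
    unfolding norm_vec_def by (rule L2_set_le_sum) simp
  also have "\<dots> \<le> (\<Sum>i\<in>(UNIV::'m set). \<Sum>j\<in>(UNIV::'n set). 1)"
    by (intro sum_mono order_trans[OF norm_le_l1_cart] assms)
  finally show ?thesis by simp
qed

definition is_svd :: "real^'n^'n \<Rightarrow> nat \<Rightarrow> (nat \<Rightarrow> real) \<Rightarrow> (nat \<Rightarrow> real^'n) \<Rightarrow> (nat \<Rightarrow> real^'n) \<Rightarrow> bool" where
  "is_svd A m a u v \<longleftrightarrow>
     A = (\<Sum>i=1..m. a i *\<^sub>R outer (u i) (v i)) \<and>
     (\<forall>i\<in>{1..m}. 0 \<le> a i) \<and> (\<forall>i\<in>{1..m}. \<forall>k\<in>{1..m}. i \<le> k \<longrightarrow> a k \<le> a i) \<and>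
     orthonormal_on {1..m} u \<and> orthonormal_on {1..m} v"

lemma is_svdD:
  assumes "is_svd A m a u v"
  shows "orthonormal_on {1..m} u" "orthonormal_on {1..m} v"
    and "\<And>i. i \<in> {1..m} \<Longrightarrow> 0 \<le> a i"
    and "\<And>i k. i \<in> {1..m} \<Longrightarrow> k \<in> {1..m} \<Longrightarrow> i \<le> k \<Longrightarrow> a k \<le> a i"
  using assms unfolding is_svd_def by blast+

lemma is_svd_mult: "is_svd A m a u v \<Longrightarrow> A *v x = dyad_sum {1..m} a u v x"
  unfolding is_svd_def by (simp add: sum_outer_mult)

lemma is_svd_vector_mult: "is_svd A m a u v \<Longrightarrow> y v* A = dyad_sum {1..m} a v u y"
  unfolding is_svd_def by (simp add: vector_sum_outer_mult)

lemma is_svd_le_card: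
  fixes A :: "real^'n^'n"
  shows "is_svd A m a u v \<Longrightarrow> m \<le> CARD('n)"
  using orthonormal_on_card_le[OF is_svdD(1)] by fastforce

lemma is_svd_norm_ge:
  assumes A: "is_svd A m a u v" and k: "k \<in> {1..m}" and x: "orth_proj {1..k} v x = x"
  shows "a k * norm x \<le> norm (A *v x)"
proof (rule power2_le_imp_le)
  have vk: "orthonormal_on {1..k} v" using is_svdD(2)[OF A] k by (auto elim: orthonormal_on_subset)
  have "(a k * norm x)\<^sup>2 = (\<Sum>i\<in>{1..k}. (a k * (v i \<bullet> x))\<^sup>2)"
    using norm_dyad_sum_sq[OF vk, of "\<lambda>_. 1" v x] x
    by (simp add: power_mult_distrib sum_distrib_left)
  also have "\<dots> \<le> (\<Sum>i\<in>{1..k}. (a i * (v i \<bullet> x))\<^sup>2)"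
    using k is_svdD(3,4)[OF A]
    by (intro sum_mono) (auto simp: power_mult_distrib intro!: mult_right_mono power_mono)
  also have "\<dots> \<le> (\<Sum>i\<in>{1..m}. (a i * (v i \<bullet> x))\<^sup>2)"
    using k by (intro sum_mono2) auto
  also have "\<dots> = (norm (A *v x))\<^sup>2"
    unfolding is_svd_mult[OF A] by (rule norm_dyad_sum_sq[OF is_svdD(1)[OF A], symmetric]) simp
  finally show "(a k * norm x)\<^sup>2 \<le> (norm (A *v x))\<^sup>2" .
qed simp

lemma is_svd_norm_le:
  assumes A: "is_svd A m a u v" and k: "k \<in> {1..m}" and x: "\<And>i. i \<in> {1..k-1} \<Longrightarrow> v i \<bullet> x = 0"
  shows "norm (A *v x) \<le> a k * norm x"
proof (rule power2_le_imp_le)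
  have "(norm (A *v x))\<^sup>2 = (\<Sum>i\<in>{1..m}. (a i * (v i \<bullet> x))\<^sup>2)"
    unfolding is_svd_mult[OF A] by (rule norm_dyad_sum_sq[OF is_svdD(1)[OF A]]) simp
  also have "\<dots> \<le> (\<Sum>i\<in>{1..m}. (a k)\<^sup>2 * (v i \<bullet> x)\<^sup>2)"
  proof (rule sum_mono)
    fix i assume i: "i \<in> {1..m}"
    show "(a i * (v i \<bullet> x))\<^sup>2 \<le> (a k)\<^sup>2 * (v i \<bullet> x)\<^sup>2"
    proof (cases "i < k")
      case False
      then have "0 \<le> a i" "a i \<le> a k" using is_svdD(3,4)[OF A] i k by auto
      then show ?thesis by (simp add: power_mult_distrib mult_right_mono power_mono)
    qed (use x i in auto)
  qed
  also have "\<dots> \<le> (a k)\<^sup>2 * (norm x)\<^sup>2"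
    unfolding sum_distrib_left[symmetric]
    by (intro mult_left_mono orthonormal_on_bessel[OF is_svdD(2)[OF A]]) simp_all
  finally show "(norm (A *v x))\<^sup>2 \<le> (a k * norm x)\<^sup>2" by (simp add: power_mult_distrib)
qed (use is_svdD(3)[OF A k] in simp)

lemma weyl_singular_value_le:
  assumes A: "is_svd A m a u v" and B: "is_svd B n b u' v'" and k: "k \<in> {1..m}" "k \<le> n"
  shows "a k \<le> b k + spec_norm (A - B)"
proof -
  have v: "orthonormal_on {1..k} v"
    by (rule orthonormal_on_subset[OF is_svdD(2)[OF A]]) (use k in auto)
  have v': "orthonormal_on {1..k-1} v'"
    by (rule orthonormal_on_subset[OF is_svdD(2)[OF B]]) (use k in auto)
  obtain x where x: "x \<noteq> 0" "orth_proj {1..k} v x = x" "\<And>i. i \<in> {1..k-1} \<Longrightarrow> v' i \<bullet> x = 0"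
    by (rule orthonormal_on_exists_orthogonal[OF v _ v']) (use k in auto)
  have "a k * norm x \<le> norm (A *v x)" by (rule is_svd_norm_ge[OF A k(1) x(2)])
  also have "\<dots> \<le> norm (B *v x) + norm ((A - B) *v x)"
    using norm_triangle_ineq[of "B *v x" "(A - B) *v x"]
    by (simp add: matrix_vector_mult_diff_rdistrib)
  also have "\<dots> \<le> b k * norm x + spec_norm (A - B) * norm x"
    using k by (intro add_mono is_svd_norm_le[OF B] norm_mult_le_spec_norm x(3)) auto
  finally show ?thesis using x(1) by (simp add: distrib_right[symmetric])
qed

section \<open>The symmetric dilation and the Davis--Kahan estimate\<close>

lemma power2_norm_prod: "(norm z)\<^sup>2 = (norm (fst z))\<^sup>2 + (norm (snd z))\<^sup>2"
  by (simp add: norm_prod_def)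

text \<open>The matrix [[0, A], [A^T, 0]] acting on pairs.\<close>
definition dilation :: "real^'n^'n \<Rightarrow> (real^'n) \<times> (real^'n) \<Rightarrow> (real^'n) \<times> (real^'n)" where
  "dilation A z = (A *v snd z, fst z v* A)"

lemma dilation_diff: "dilation (A - B) z = dilation A z - dilation B z"
  by (simp add: dilation_def matrix_vector_mult_diff_rdistrib vector_matrix_mult_diff_rdistrib)

lemma norm_dilation_le: "norm (dilation A z) \<le> spec_norm A * norm z"
proof (rule power2_le_imp_le)
  have "(norm (dilation A z))\<^sup>2 = (norm (A *v snd z))\<^sup>2 + (norm (fst z v* A))\<^sup>2"
    by (simp add: dilation_def power2_norm_prod)
  also have "\<dots> \<le> (spec_norm A * norm (snd z))\<^sup>2 + (spec_norm A * norm (fst z))\<^sup>2"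
    by (intro add_mono power_mono norm_mult_le_spec_norm norm_vector_mult_le_spec_norm) simp_all
  also have "\<dots> = (spec_norm A * norm z)\<^sup>2"
    by (simp add: power_mult_distrib power2_norm_prod[of z] algebra_simps)
  finally show "(norm (dilation A z))\<^sup>2 \<le> (spec_norm A * norm z)\<^sup>2" .
qed (simp add: spec_norm_nonneg)

text \<open>
  The projection onto the orthogonal complement of the vectors (u i, v i), i \<in> I; these are
  orthogonal of norm \<open>sqrt 2\<close>, whence the factor 1/2.\<close>
definition pair_residual :: "nat set \<Rightarrow> (nat \<Rightarrow> real^'n) \<Rightarrow> (nat \<Rightarrow> real^'n) \<Rightarrow> (real^'n) \<times> (real^'n) \<Rightarrow> (real^'n) \<times> (real^'n)" where
  "pair_residual I u v z =
     (let \<alpha> = (\<lambda>i. (u i \<bullet> fst z + v i \<bullet> snd z) / 2)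
      in (fst z - (\<Sum>i\<in>I. \<alpha> i *\<^sub>R u i), snd z - (\<Sum>i\<in>I. \<alpha> i *\<^sub>R v i)))"

lemma pair_residual_linear: "linear (pair_residual I u v)"
  by (rule linearI)
     (simp_all add: pair_residual_def inner_add_right inner_scaleR_right add_divide_distrib
       scaleR_add_left sum.distrib scaleR_sum_right algebra_simps)

context
  fixes I :: "nat set" and u v :: "nat \<Rightarrow> real^'n"
  assumes u: "orthonormal_on I u" and v: "orthonormal_on I v" and I: "finite I"
begin

lemma pair_residual_orthogonal:
  "k \<in> I \<Longrightarrow> u k \<bullet> fst (pair_residual I u v z) + v k \<bullet> snd (pair_residual I u v z) = 0"
  by (simp add: pair_residual_def inner_diff_right orthonormal_on_inner_sum[OF u order_refl I]
      orthonormal_on_inner_sum[OF v order_refl I])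

lemma norm_pair_residual_le: "norm (pair_residual I u v z) \<le> norm z"
proof -
  define \<alpha> where "\<alpha> i = (u i \<bullet> fst z + v i \<bullet> snd z) / 2" for i
  define p where "p = ((\<Sum>i\<in>I. \<alpha> i *\<^sub>R u i), (\<Sum>i\<in>I. \<alpha> i *\<^sub>R v i))"
  have res: "pair_residual I u v z = z - p"
    by (simp add: pair_residual_def \<alpha>_def p_def prod_eq_iff)
  have "pair_residual I u v z \<bullet> p
      = (\<Sum>i\<in>I. \<alpha> i * (u i \<bullet> fst (pair_residual I u v z) + v i \<bullet> snd (pair_residual I u v z)))"
    by (simp add: inner_prod_def p_def inner_sum_right sum.distrib distrib_left inner_commute)
  also have "\<dots> = 0" by (simp add: pair_residual_orthogonal)
  finally have "(norm z)\<^sup>2 = (norm (pair_residual I u v z))\<^sup>2 + (norm p)\<^sup>2"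
    using norm_add_Pythagorean[of "pair_residual I u v z" p] by (simp add: orthogonal_def res)
  then show ?thesis by (simp add: power2_le_imp_le)
qed

lemma fst_pair_residual_bound: "norm (fst z - orth_proj I u (fst z)) \<le> norm (pair_residual I u v z)"
proof -
  have "norm (fst z - orth_proj I u (fst z)) \<le> norm (fst (pair_residual I u v z))"
    unfolding pair_residual_def Let_def fst_conv by (rule orth_proj_best_approx[OF u I])
  also have "\<dots> \<le> norm (pair_residual I u v z)"
    using norm_fst_le[of "fst (pair_residual I u v z)" "snd (pair_residual I u v z)"] by simp
  finally show ?thesis .
qed

lemma snd_pair_residual_bound: "norm (snd z - orth_proj I v (snd z)) \<le> norm (pair_residual I u v z)"
proof -
  have "norm (snd z - orth_proj I v (snd z)) \<le> norm (snd (pair_residual I u v z))"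
    unfolding pair_residual_def Let_def snd_conv by (rule orth_proj_best_approx[OF v I])
  also have "\<dots> \<le> norm (pair_residual I u v z)"
    using norm_snd_le[of "snd (pair_residual I u v z)" "fst (pair_residual I u v z)"] by simp
  finally show ?thesis .
qed

end

lemma dilation_pair_residual:
  assumes A: "is_svd A m a u v" and I: "I \<subseteq> {1..m}"
  shows "dilation A (pair_residual I u v z) = pair_residual I u v (dilation A z)"
proof -
  have fin: "finite {1..m}" by simp
  have coeff: "u i \<bullet> (A *v snd z) + v i \<bullet> (fst z v* A) = a i * (u i \<bullet> fst z + v i \<bullet> snd z)"
    if "i \<in> I" for i
    using inner_dyad_sum[OF is_svdD(1)[OF A] order_refl fin, of i a v "snd z"]
      inner_dyad_sum[OF is_svdD(2)[OF A] order_refl fin, of i a u "fst z"] that I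
    by (auto simp: is_svd_mult[OF A] is_svd_vector_mult[OF A] distrib_left)
  have "dilation A (pair_residual I u v z)
      = dilation A z - (\<Sum>i\<in>I. ((u i \<bullet> fst z + v i \<bullet> snd z) / 2 * a i) *\<^sub>R (u i, v i))"
    using dyad_sum_sum[OF is_svdD(2)[OF A] I fin, of a u] dyad_sum_sum[OF is_svdD(1)[OF A] I fin, of a v]
    by (simp add: pair_residual_def dilation_def is_svd_mult[OF A] is_svd_vector_mult[OF A]
        linear_diff[OF dyad_sum_linear] prod_eq_iff fst_sum snd_sum mult_ac)
  also have "\<dots> = pair_residual I u v (dilation A z)"
    by (simp add: pair_residual_def prod_eq_iff fst_sum snd_sum coeff dilation_def mult.commute
        cong: sum.cong)
  finally show ?thesis .
qed

text \<open>
  The 2 x 2 block [[-\<gamma>, \<sigma>], [\<sigma>, -\<gamma>]] of the shifted dilation has the eigenvalues \<open>\<sigma> - \<gamma>\<close>,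
  with eigenvector (1, 1), and \<open>-\<sigma> - \<gamma>\<close>, with eigenvector (1, -1).\<close>
lemma dilation_block_lower_bound:
  fixes a b \<sigma> \<gamma> k :: real
  assumes k: "0 \<le> k"
    and c: "(0 \<le> \<sigma> \<and> 0 \<le> \<gamma> \<and> k \<le> \<bar>\<sigma> - \<gamma>\<bar>) \<or> (a = - b \<and> k \<le> \<sigma> + \<gamma>)"
  shows "k\<^sup>2 * (a\<^sup>2 + b\<^sup>2) \<le> (\<sigma> * b - \<gamma> * a)\<^sup>2 + (\<sigma> * a - \<gamma> * b)\<^sup>2"
  using c
proof
  assume h: "0 \<le> \<sigma> \<and> 0 \<le> \<gamma> \<and> k \<le> \<bar>\<sigma> - \<gamma>\<bar>"
  have e: "(\<sigma> * b - \<gamma> * a)\<^sup>2 + (\<sigma> * a - \<gamma> * b)\<^sup>2 = (\<sigma> - \<gamma>)\<^sup>2 * (a\<^sup>2 + b\<^sup>2) + 2 * (\<sigma> * \<gamma>) * (a - b)\<^sup>2"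
    by (simp add: power2_eq_square algebra_simps)
  have "k\<^sup>2 \<le> (\<sigma> - \<gamma>)\<^sup>2" using h k by (metis abs_le_square_iff abs_of_nonneg)
  then have "k\<^sup>2 * (a\<^sup>2 + b\<^sup>2) \<le> (\<sigma> - \<gamma>)\<^sup>2 * (a\<^sup>2 + b\<^sup>2)" by (rule mult_right_mono) simp
  moreover have "0 \<le> 2 * (\<sigma> * \<gamma>) * (a - b)\<^sup>2" using h by simp
  ultimately show ?thesis unfolding e by argo
next
  assume h: "a = - b \<and> k \<le> \<sigma> + \<gamma>"
  then have "k\<^sup>2 \<le> (\<sigma> + \<gamma>)\<^sup>2" using k by (simp add: power_mono)
  then have "k\<^sup>2 * (2 * b\<^sup>2) \<le> (\<sigma> + \<gamma>)\<^sup>2 * (2 * b\<^sup>2)" by (rule mult_right_mono) simp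
  moreover have "(\<sigma> * b - \<gamma> * a)\<^sup>2 + (\<sigma> * a - \<gamma> * b)\<^sup>2 = (\<sigma> + \<gamma>)\<^sup>2 * (2 * b\<^sup>2)"
    using h by (simp add: power2_eq_square algebra_simps)
  ultimately show ?thesis using h by simp
qed

text \<open>
  In the coordinates of the singular vectors the shifted dilation splits into the blocks above,
  and the component of \<open>z\<close> orthogonal to all singular vectors is just scaled by \<open>-\<gamma>\<close>.\<close>
lemma norm_dilation_shift_sq:
  assumes A: "is_svd A m a u v"
  shows "(norm (dilation A z - \<gamma> *\<^sub>R z))\<^sup>2
    = (\<Sum>i=1..m. (a i * (v i \<bullet> snd z) - \<gamma> * (u i \<bullet> fst z))\<^sup>2 + (a i * (u i \<bullet> fst z) - \<gamma> * (v i \<bullet> snd z))\<^sup>2)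
      + \<gamma>\<^sup>2 * ((norm (fst z - orth_proj {1..m} u (fst z)))\<^sup>2 + (norm (snd z - orth_proj {1..m} v (snd z)))\<^sup>2)"
proof -
  let ?M = "{1..m}"
  have u: "orthonormal_on ?M u" and v: "orthonormal_on ?M v" and fin: "finite ?M"
    using is_svdD[OF A] by simp_all
  define \<alpha> where "\<alpha> i = u i \<bullet> fst z" for i
  define \<beta> where "\<beta> i = v i \<bullet> snd z" for i
  define x0 where "x0 = fst z - orth_proj ?M u (fst z)"
  define y0 where "y0 = snd z - orth_proj ?M v (snd z)"
  have fst_eq: "fst (dilation A z - \<gamma> *\<^sub>R z) = (\<Sum>i\<in>?M. (a i * \<beta> i - \<gamma> * \<alpha> i) *\<^sub>R u i) + (- \<gamma>) *\<^sub>R x0"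
    by (simp add: dilation_def is_svd_mult[OF A] dyad_sum_def x0_def \<alpha>_def \<beta>_def algebra_simps
        scaleR_diff_left sum_subtractf scaleR_sum_right sum_negf)
  have snd_eq: "snd (dilation A z - \<gamma> *\<^sub>R z) = (\<Sum>i\<in>?M. (a i * \<alpha> i - \<gamma> * \<beta> i) *\<^sub>R v i) + (- \<gamma>) *\<^sub>R y0"
    by (simp add: dilation_def is_svd_vector_mult[OF A] dyad_sum_def y0_def \<alpha>_def \<beta>_def algebra_simps
        scaleR_diff_left sum_subtractf scaleR_sum_right sum_negf)
  have x0: "u i \<bullet> ((- \<gamma>) *\<^sub>R x0) = 0" and y0: "v i \<bullet> ((- \<gamma>) *\<^sub>R y0) = 0" if "i \<in> ?M" for i
    using orth_proj_orthogonal[OF u fin that] orth_proj_orthogonal[OF v fin that]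
    by (simp_all add: x0_def y0_def)
  have "(norm (fst (dilation A z - \<gamma> *\<^sub>R z)))\<^sup>2
      = (\<Sum>i\<in>?M. (a i * \<beta> i - \<gamma> * \<alpha> i)\<^sup>2) + \<gamma>\<^sup>2 * (norm x0)\<^sup>2"
    unfolding fst_eq by (subst orthonormal_on_norm_sum_add[OF u fin x0]) (simp_all add: power_mult_distrib)
  moreover have "(norm (snd (dilation A z - \<gamma> *\<^sub>R z)))\<^sup>2
      = (\<Sum>i\<in>?M. (a i * \<alpha> i - \<gamma> * \<beta> i)\<^sup>2) + \<gamma>\<^sup>2 * (norm y0)\<^sup>2"
    unfolding snd_eq by (subst orthonormal_on_norm_sum_add[OF v fin y0]) (simp_all add: power_mult_distrib)
  ultimately show ?thesis
    by (simp add: power2_norm_prod[of "dilation A z - \<gamma> *\<^sub>R z"] sum.distrib algebra_simps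
        \<alpha>_def \<beta>_def x0_def y0_def)
qed

lemma dilation_shift_lower_bound:
  assumes A: "is_svd A m a u v" and J: "J \<subseteq> {1..m}" and k: "0 \<le> k" "k \<le> \<gamma>"
    and gap: "\<And>i. i \<in> {1..m} \<Longrightarrow> i \<notin> J \<Longrightarrow> k \<le> \<bar>a i - \<gamma>\<bar>"
    and z: "\<And>i. i \<in> J \<Longrightarrow> u i \<bullet> fst z + v i \<bullet> snd z = 0"
  shows "k * norm z \<le> norm (dilation A z - \<gamma> *\<^sub>R z)"
proof (rule power2_le_imp_le)
  let ?M = "{1..m}"
  have u: "orthonormal_on ?M u" and v: "orthonormal_on ?M v" and fin: "finite ?M"
    using is_svdD[OF A] by simp_all
  define \<alpha> where "\<alpha> i = u i \<bullet> fst z" for i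
  define \<beta> where "\<beta> i = v i \<bullet> snd z" for i
  define x0 where "x0 = fst z - orth_proj ?M u (fst z)"
  define y0 where "y0 = snd z - orth_proj ?M v (snd z)"
  have image: "(norm (dilation A z - \<gamma> *\<^sub>R z))\<^sup>2
      = (\<Sum>i\<in>?M. (a i * \<beta> i - \<gamma> * \<alpha> i)\<^sup>2 + (a i * \<alpha> i - \<gamma> * \<beta> i)\<^sup>2)
        + \<gamma>\<^sup>2 * ((norm x0)\<^sup>2 + (norm y0)\<^sup>2)"
    unfolding \<alpha>_def \<beta>_def x0_def y0_def by (rule norm_dilation_shift_sq[OF A])
  have z_norm: "(norm z)\<^sup>2 = (\<Sum>i\<in>?M. (\<alpha> i)\<^sup>2 + (\<beta> i)\<^sup>2) + ((norm x0)\<^sup>2 + (norm y0)\<^sup>2)"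
    using orth_proj_pythagoras[OF u fin, of "fst z"] orth_proj_pythagoras[OF v fin, of "snd z"]
    by (simp add: power2_norm_prod[of z] x0_def y0_def \<alpha>_def \<beta>_def sum.distrib)
  have block: "k\<^sup>2 * ((\<alpha> i)\<^sup>2 + (\<beta> i)\<^sup>2) \<le> (a i * \<beta> i - \<gamma> * \<alpha> i)\<^sup>2 + (a i * \<alpha> i - \<gamma> * \<beta> i)\<^sup>2"
    if i: "i \<in> ?M" for i
  proof (rule dilation_block_lower_bound[OF k(1)])
    have "0 \<le> a i" using is_svdD(3)[OF A i] .
    moreover have "\<alpha> i = - \<beta> i" if "i \<in> J" using z[OF that] by (simp add: \<alpha>_def \<beta>_def eq_neg_iff_add_eq_0)
    ultimately show "(0 \<le> a i \<and> 0 \<le> \<gamma> \<and> k \<le> \<bar>a i - \<gamma>\<bar>) \<or> (\<alpha> i = - \<beta> i \<and> k \<le> a i + \<gamma>)"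
      using gap[OF i] k by (cases "i \<in> J") auto
  qed
  have "k\<^sup>2 * (\<Sum>i\<in>?M. (\<alpha> i)\<^sup>2 + (\<beta> i)\<^sup>2)
      \<le> (\<Sum>i\<in>?M. (a i * \<beta> i - \<gamma> * \<alpha> i)\<^sup>2 + (a i * \<alpha> i - \<gamma> * \<beta> i)\<^sup>2)"
    unfolding sum_distrib_left by (rule sum_mono) (rule block)
  moreover have "k\<^sup>2 * ((norm x0)\<^sup>2 + (norm y0)\<^sup>2) \<le> \<gamma>\<^sup>2 * ((norm x0)\<^sup>2 + (norm y0)\<^sup>2)"
    using k by (intro mult_right_mono power_mono) simp_all
  ultimately show "(k * norm z)\<^sup>2 \<le> (norm (dilation A z - \<gamma> *\<^sub>R z))\<^sup>2"
    unfolding power_mult_distrib image z_norm distrib_left by (rule add_mono)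
qed simp

text \<open>
  The a-priori estimate behind the Davis--Kahan theorem, applied to the operator norm K of Z:
  \<open>(\<rho> + \<delta>) K \<le> K \<rho> + c\<close>.\<close>
lemma sylvester_bound:
  fixes Z :: "'a::{real_normed_vector, perfect_space} \<Rightarrow> 'b::real_normed_vector"
  assumes Z: "bounded_linear Z" and \<rho>: "0 \<le> \<rho>" and \<delta>: "0 < \<delta>"
    and \<Lambda>: "\<And>x. norm (\<Lambda> x) \<le> \<rho> * norm x"
    and step: "\<And>x. (\<rho> + \<delta>) * norm (Z x) \<le> norm (Z (\<Lambda> x)) + c * norm x"
  shows "norm (Z x) \<le> c / \<delta> * norm x"
proof -
  let ?K = "onorm Z"
  have "norm (Z y) \<le> (?K * \<rho> + c) / (\<rho> + \<delta>) * norm y" for y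
  proof -
    have "norm (Z (\<Lambda> y)) \<le> ?K * (\<rho> * norm y)"
      using onorm[OF Z, of "\<Lambda> y"] mult_left_mono[OF \<Lambda>[of y] onorm_pos_le[OF Z]] by linarith
    then have "(\<rho> + \<delta>) * norm (Z y) \<le> (?K * \<rho> + c) * norm y"
      using step[of y] by (simp add: algebra_simps)
    then show ?thesis using \<rho> \<delta> by (simp add: field_simps)
  qed
  then have "?K \<le> (?K * \<rho> + c) / (\<rho> + \<delta>)" by (rule onorm_le)
  then have "?K \<le> c / \<delta>" using \<rho> \<delta> by (simp add: field_simps)
  then show ?thesis using onorm[OF Z, of x] by (meson mult_right_mono norm_ge_zero order_trans)
qed

section \<open>Orthogonal Procrustes alignment\<close>

text \<open>
  First-order optimality under rotations: the left-hand side is linear in the angle, the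
  right-hand side quadratic.  The rational parametrisation \<open>((1 - x\<^sup>2), 2 x) / (1 + x\<^sup>2)\<close> of the
  circle makes this quantitative.\<close>
lemma rotation_bound_rational:
  fixes d A :: real
  assumes H: "\<And>c s. c\<^sup>2 + s\<^sup>2 = 1 \<Longrightarrow> c * s * d \<le> s\<^sup>2 * A"
  shows "x * (1 - x\<^sup>2) * d \<le> 2 * x\<^sup>2 * A"
proof -
  define q where "q = 1 + x\<^sup>2"
  have q: "0 < q" unfolding q_def by (simp add: add_pos_nonneg)
  define c where "c = (1 - x\<^sup>2) / q"
  define s where "s = 2 * x / q"
  have "c\<^sup>2 + s\<^sup>2 = ((1 - x\<^sup>2)\<^sup>2 + (2 * x)\<^sup>2) / q\<^sup>2"
    unfolding c_def s_def by (simp add: power_divide add_divide_distrib)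
  also have "(1 - x\<^sup>2)\<^sup>2 + (2 * x)\<^sup>2 = q\<^sup>2" unfolding q_def by (simp add: power2_eq_square algebra_simps)
  finally have "c * s * d \<le> s\<^sup>2 * A" using q by (intro H) simp
  then have ineq: "(c * s * d) * (q\<^sup>2 / 2) \<le> (s\<^sup>2 * A) * (q\<^sup>2 / 2)" by (rule mult_right_mono) simp
  have "(c * s * d) * (q\<^sup>2 / 2) = x * (1 - x\<^sup>2) * d"
    unfolding c_def s_def using q by (simp add: power2_eq_square field_simps)
  moreover have "(s\<^sup>2 * A) * (q\<^sup>2 / 2) = 2 * x\<^sup>2 * A"
    unfolding s_def using q by (simp add: power2_eq_square field_simps)
  ultimately show ?thesis using ineq by (simp only:)
qed

lemma eq_0_if_rotation_bound:
  fixes d A :: real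
  assumes H: "\<And>c s. c\<^sup>2 + s\<^sup>2 = 1 \<Longrightarrow> c * s * d \<le> s\<^sup>2 * A"
  shows "d = 0"
proof (rule ccontr)
  assume d0: "d \<noteq> 0"
  define \<tau> where "\<tau> = \<bar>d\<bar> / (4 * \<bar>A\<bar> + 4 * \<bar>d\<bar>)"
  have den: "0 < 4 * \<bar>A\<bar> + 4 * \<bar>d\<bar>" using d0 by simp
  have \<tau>0: "0 < \<tau>" and \<tau>1: "\<tau> \<le> 1/4" unfolding \<tau>_def using d0 den by (simp_all add: field_simps)
  define x where "x = (if 0 < d then \<tau> else - \<tau>)"
  have xd: "x * d = \<tau> * \<bar>d\<bar>" and x2: "x\<^sup>2 = \<tau>\<^sup>2" unfolding x_def by auto
  have "(1 - x\<^sup>2) * (x * d) \<le> 2 * x\<^sup>2 * A"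
    using rotation_bound_rational[OF H, of x] by (simp add: mult_ac)
  then have "\<tau> * ((1 - \<tau>\<^sup>2) * \<bar>d\<bar>) \<le> \<tau> * (2 * \<tau> * A)"
    unfolding xd x2 by (simp add: power2_eq_square mult_ac)
  then have "(1 - \<tau>\<^sup>2) * \<bar>d\<bar> \<le> 2 * \<tau> * A" using \<tau>0 by simp
  also have "\<dots> \<le> 2 * \<tau> * \<bar>A\<bar>" using \<tau>0 by simp
  also have "\<dots> \<le> \<bar>d\<bar> / 2"
    unfolding \<tau>_def using den by (simp add: field_simps)
  finally have "(1 - \<tau>\<^sup>2) * \<bar>d\<bar> \<le> \<bar>d\<bar> / 2" .
  moreover have "\<tau>\<^sup>2 \<le> 1/16"
    using power_mono[OF \<tau>1, of 2] \<tau>0 by (simp add: power2_eq_square)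
  then have "(15/16) * \<bar>d\<bar> \<le> (1 - \<tau>\<^sup>2) * \<bar>d\<bar>" by (intro mult_right_mono) simp_all
  ultimately show False using d0 by simp
qed

lemma discriminant_le_if_nonneg:
  fixes a b c :: real
  assumes H: "\<And>x. 0 \<le> a + 2 * x * b + x\<^sup>2 * c" and c: "0 \<le> c"
  shows "b\<^sup>2 \<le> a * c"
proof (cases "c = 0")
  case True
  have "b = 0"
  proof (rule ccontr)
    assume "b \<noteq> 0"
    then show False using H[of "- (a + 1) / (2 * b)"] True by (simp add: field_simps)
  qed
  then show ?thesis using True by simp
next
  case False
  then have "0 < c" using c by simp
  then show ?thesis using H[of "- b / c"] by (simp add: power2_eq_square field_simps)
qed

definition householder :: "real^'n \<Rightarrow> real^'n^'n" where
  "householder y = mat 1 - 2 *\<^sub>R outer y y"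

lemma householder_mult: "householder y *v z = z - (2 * (y \<bullet> z)) *\<^sub>R y"
  by (simp add: householder_def matrix_vector_mult_diff_rdistrib outer_mult
      flip: scaleR_matrix_vector_assoc)

lemma householder_inner:
  assumes "norm y = 1"
  shows "(householder y *v z) \<bullet> (householder y *v z') = z \<bullet> z'"
proof -
  have "y \<bullet> y = 1" using assms by (simp add: dot_square_norm)
  then show ?thesis
    by (simp add: householder_mult inner_diff_left inner_diff_right inner_commute algebra_simps)
qed

text \<open>
  The alignment of two orthonormal families \<open>u\<close> and \<open>v\<close>: a maximiser of the trace
  \<open>\<Sum> u l \<bullet> L u l\<close> among the partial isometries from \<open>span u\<close> onto \<open>span v\<close>.  Optimality
  against (products of two) Householder reflections makes \<open>[u a \<bullet> L u b]\<close> symmetric positive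
  semidefinite.\<close>
locale procrustes =
  fixes I :: "nat set" and u v :: "nat \<Rightarrow> real^'n"
  assumes finite_I: "finite I" and u: "orthonormal_on I u" and v: "orthonormal_on I v"
begin

abbreviation "P \<equiv> orth_proj I u"

definition alignments :: "(real^'n^'n) set" where
  "alignments = {L. (\<forall>x. L *v x = L *v P x) \<and> orthonormal_on I (\<lambda>l. L *v u l) \<and>
                    (\<forall>l\<in>I. orth_proj I v (L *v u l) = L *v u l)}"

definition alignment_trace :: "real^'n^'n \<Rightarrow> real" where
  "alignment_trace L = (\<Sum>l\<in>I. u l \<bullet> (L *v u l))"

lemma alignment_mult:
  assumes "L \<in> alignments"
  shows "L *v x = dyad_sum I (\<lambda>_. 1) (\<lambda>l. L *v u l) u x"
proof -
  have "L *v x = L *v P x" using assms unfolding alignments_def by blast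
  also have "\<dots> = dyad_sum I (\<lambda>_. 1) (\<lambda>l. L *v u l) u x"
    unfolding dyad_sum_def linear_sum[OF matrix_vector_mul_linear] linear_cmul[OF matrix_vector_mul_linear] ..
  finally show ?thesis .
qed

lemma alignment_orthonormal: "L \<in> alignments \<Longrightarrow> orthonormal_on I (\<lambda>l. L *v u l)"
  unfolding alignments_def by blast

lemma norm_alignment_le: "L \<in> alignments \<Longrightarrow> norm (L *v x) \<le> norm x"
  using norm_dyad_sum_le[OF alignment_orthonormal u finite_I, of L "\<lambda>_. 1" 1 x]
  by (simp only: alignment_mult[of L x]) simp

lemma alignments_compact: "compact alignments"
proof (rule compact_eq_bounded_closed[THEN iffD2, OF conjI])
  have "\<bar>L $ i $ j\<bar> \<le> 1" if "L \<in> alignments" for L i j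
    using matrix_component_le_onorm[of L i j] onorm_le[of "(*v) L" 1] norm_alignment_le[OF that]
    by fastforce
  then show "bounded alignments"
    unfolding bounded_iff by (blast intro: norm_matrix_le_entries)
  have mult: "continuous_on UNIV (\<lambda>L::real^'n^'n. L *v x)" for x
    by (intro linear_continuous_on linear_conv_bounded_linear[THEN iffD1] linearI)
       (simp_all add: matrix_vector_mult_add_rdistrib scaleR_matrix_vector_assoc)
  have proj: "continuous_on UNIV (orth_proj I v)"
    by (intro linear_continuous_on linear_conv_bounded_linear[THEN iffD1] dyad_sum_linear)
  have "alignments = (\<Inter>x. {L. L *v x = L *v P x}) \<inter>
      (\<Inter>l\<in>I. \<Inter>l'\<in>I. {L. (L *v u l) \<bullet> (L *v u l') = (if l = l' then 1 else 0)}) \<inter>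
      (\<Inter>l\<in>I. {L. orth_proj I v (L *v u l) = L *v u l})"
    unfolding alignments_def orthonormal_on_def by auto
  also have "closed \<dots>"
    by (intro closed_Int closed_INT ballI closed_Collect_eq continuous_on_inner continuous_on_const
        mult continuous_on_compose2[OF proj mult]) auto
  finally show "closed alignments" .
qed

lemma alignments_nonempty: "(\<Sum>l\<in>I. outer (v l) (u l)) \<in> alignments"
proof -
  let ?L = "\<Sum>l\<in>I. outer (v l) (u l)"
  have L: "?L *v x = dyad_sum I (\<lambda>_. 1) v u x" for x
    using sum_outer_mult[of "\<lambda>_. 1" v u I x] by simp
  have Lu: "?L *v u l = v l" if "l \<in> I" for l
    using dyad_sum_basis[OF u finite_I that] by (simp add: L)
  have "?L *v x = ?L *v P x" for x
    using dyad_sum_comp[OF u order_refl finite_I, of "\<lambda>_. 1" v "\<lambda>_. 1" u x] by (simp add: L)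
  moreover have "orthonormal_on I (\<lambda>l. ?L *v u l)"
    using v by (simp add: orthonormal_on_def Lu)
  moreover have "orth_proj I v (?L *v u l) = ?L *v u l" if "l \<in> I" for l
    using dyad_sum_basis[OF v finite_I that] by (simp add: Lu that)
  ultimately show ?thesis unfolding alignments_def by blast
qed

lemma householder_alignments:
  assumes L: "L \<in> alignments" and y: "orth_proj I v y = y" "norm y = 1"
  shows "householder y ** L \<in> alignments"
proof -
  have "(householder y ** L) *v x = (householder y ** L) *v P x" for x
    using L unfolding alignments_def by (simp flip: matrix_vector_mul_assoc)
  moreover have "orthonormal_on I (\<lambda>l. (householder y ** L) *v u l)"
    using alignment_orthonormal[OF L]
    by (simp add: orthonormal_on_def householder_inner[OF y(2)] flip: matrix_vector_mul_assoc)
  moreover have "orth_proj I v ((householder y ** L) *v u l) = (householder y ** L) *v u l"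
    if "l \<in> I" for l
    using L that y(1) unfolding alignments_def
    by (simp add: householder_mult linear_diff[OF dyad_sum_linear] linear_cmul[OF dyad_sum_linear]
        flip: matrix_vector_mul_assoc)
  ultimately show ?thesis unfolding alignments_def by blast
qed

lemma inner_alignment_mult:
  "L \<in> alignments \<Longrightarrow> y \<bullet> (L *v z) = (\<Sum>l\<in>I. (u l \<bullet> z) * (y \<bullet> (L *v u l)))"
  by (simp only: alignment_mult[of L z]) (simp add: dyad_sum_def inner_sum_right)

lemma alignment_trace_householder:
  assumes "L \<in> alignments"
  shows "alignment_trace (householder y ** L) = alignment_trace L - 2 * (y \<bullet> (L *v y))"
  unfolding alignment_trace_def inner_alignment_mult[OF assms, of y y]
  by (simp add: householder_mult inner_diff_right sum_subtractf sum_distrib_left mult_ac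
      flip: matrix_vector_mul_assoc)

definition L_opt :: "real^'n^'n" where
  "L_opt = (SOME L. L \<in> alignments \<and> (\<forall>L'\<in>alignments. alignment_trace L' \<le> alignment_trace L))"

lemma L_opt: "L_opt \<in> alignments" "L \<in> alignments \<Longrightarrow> alignment_trace L \<le> alignment_trace L_opt"
proof -
  have "continuous_on alignments alignment_trace"
    unfolding alignment_trace_def
    by (intro continuous_intros linear_continuous_on linear_conv_bounded_linear[THEN iffD1] linearI)
       (simp_all add: matrix_vector_mult_add_rdistrib scaleR_matrix_vector_assoc)
  then have "\<exists>L\<in>alignments. \<forall>L'\<in>alignments. alignment_trace L' \<le> alignment_trace L"
    using alignments_compact alignments_nonempty by (intro continuous_attains_sup) auto
  then have "L_opt \<in> alignments \<and> (\<forall>L'\<in>alignments. alignment_trace L' \<le> alignment_trace L_opt)"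
    unfolding L_opt_def by (rule someI_ex[OF bexE]) blast
  then show "L_opt \<in> alignments" "L \<in> alignments \<Longrightarrow> alignment_trace L \<le> alignment_trace L_opt"
    by auto
qed

definition w :: "nat \<Rightarrow> real^'n" where
  "w l = L_opt *v u l"

lemma w_orthonormal: "orthonormal_on I w"
  unfolding w_def by (rule alignment_orthonormal[OF L_opt(1)])

lemma w_in_span: "l \<in> I \<Longrightarrow> orth_proj I v (w l) = w l"
  using L_opt(1) unfolding alignments_def w_def by blast

lemma L_opt_mult: "L_opt *v x = dyad_sum I (\<lambda>_. 1) w u x"
  unfolding w_def by (rule alignment_mult[OF L_opt(1)])

lemma inner_L_opt_nonneg:
  assumes "orth_proj I v y = y" "norm y = 1"
  shows "0 \<le> y \<bullet> (L_opt *v y)"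
  using L_opt(2)[OF householder_alignments[OF L_opt(1) assms]]
  by (simp add: alignment_trace_householder[OF L_opt(1)])

lemma L_opt_two_reflections:
  assumes y: "orth_proj I v y = y" "norm y = 1" and z: "orth_proj I v z = z" "norm z = 1"
  shows "2 * (y \<bullet> z) * (y \<bullet> (L_opt *v z)) \<le> y \<bullet> (L_opt *v y) + z \<bullet> (L_opt *v z)"
proof -
  have "alignment_trace (householder z ** (householder y ** L_opt)) \<le> alignment_trace L_opt"
    by (intro L_opt(2) householder_alignments L_opt(1) y z)
  moreover have "alignment_trace (householder z ** (householder y ** L_opt))
      = alignment_trace L_opt - 2 * (y \<bullet> (L_opt *v y))
        - 2 * (z \<bullet> (L_opt *v z) - 2 * (y \<bullet> z) * (y \<bullet> (L_opt *v z)))"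
    by (simp add: alignment_trace_householder householder_alignments[OF L_opt(1) y] L_opt(1)
        householder_mult inner_diff_right inner_commute[of z y] flip: matrix_vector_mul_assoc)
  ultimately show ?thesis by argo
qed

lemma inner_w_L_opt: "l \<in> I \<Longrightarrow> w l \<bullet> (L_opt *v x) = u l \<bullet> x"
  unfolding L_opt_mult by (simp add: inner_dyad_sum[OF w_orthonormal order_refl finite_I])

lemma w_symmetric:
  assumes a: "a \<in> I" and b: "b \<in> I"
  shows "u a \<bullet> w b = u b \<bullet> w a"
proof (cases "a = b")
  case False
  let ?M = "\<lambda>i j. u i \<bullet> w j"
  have "?M a b - ?M b a = 0"
  proof (rule eq_0_if_rotation_bound)
    fix c s :: real assume cs: "c\<^sup>2 + s\<^sup>2 = 1"
    let ?z = "c *\<^sub>R w a + s *\<^sub>R w b"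
    have ww: "w a \<bullet> w b = 0" "w b \<bullet> w a = 0" "w a \<bullet> w a = 1" "w b \<bullet> w b = 1"
      using orthonormal_onD[OF w_orthonormal] a b False by auto
    have ya: "orth_proj I v (w a) = w a" "norm (w a) = 1"
      using w_in_span[OF a] orthonormal_on_norm[OF w_orthonormal a] by auto
    have "?z \<bullet> ?z = 1"
      using cs by (simp add: inner_add_left inner_add_right ww power2_eq_square)
    then have z: "orth_proj I v ?z = ?z" "norm ?z = 1"
      using w_in_span[OF a] w_in_span[OF b]
      by (simp_all add: linear_add[OF dyad_sum_linear] linear_cmul[OF dyad_sum_linear] norm_eq_sqrt_inner)
    have "2 * (w a \<bullet> ?z) * (w a \<bullet> (L_opt *v ?z)) \<le> w a \<bullet> (L_opt *v w a) + ?z \<bullet> (L_opt *v ?z)"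
      by (rule L_opt_two_reflections[OF ya z])
    then have "2 * c * (c * ?M a a + s * ?M a b)
        \<le> ?M a a + c * (c * ?M a a + s * ?M a b) + s * (c * ?M b a + s * ?M b b)"
      by (simp add: inner_add_left inner_add_right ww inner_w_L_opt a b)
    then have "c * s * (?M a b - ?M b a) \<le> (1 - c\<^sup>2) * ?M a a + s\<^sup>2 * ?M b b"
      by (simp add: algebra_simps power2_eq_square)
    also have "1 - c\<^sup>2 = s\<^sup>2" using cs by simp
    finally show "c * s * (?M a b - ?M b a) \<le> s\<^sup>2 * (?M a a + ?M b b)"
      by (simp add: distrib_left)
  qed
  then show ?thesis by simp
qed simp

lemma L_opt_in_span: "orth_proj I v (L_opt *v x) = L_opt *v x"
  unfolding L_opt_mult dyad_sum_def[of I _ w u]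
  by (simp add: linear_sum[OF dyad_sum_linear] linear_cmul[OF dyad_sum_linear] w_in_span)

lemma L_opt_form_expand:
  "P x \<bullet> (L_opt *v y) = (\<Sum>b\<in>I. \<Sum>a\<in>I. (u b \<bullet> y) * ((u a \<bullet> x) * (u a \<bullet> w b)))"
  by (simp add: L_opt_mult dyad_sum_def inner_sum_left inner_sum_right sum_distrib_left)

lemma L_opt_form_symmetric: "P x \<bullet> (L_opt *v y) = P y \<bullet> (L_opt *v x)"
  unfolding L_opt_form_expand
  by (subst sum.swap) (auto intro!: sum.cong simp: w_symmetric mult_ac)

lemma L_opt_form_nonneg: "0 \<le> P x \<bullet> (L_opt *v x)"
proof -
  let ?y = "L_opt *v x"
  have "?y \<bullet> (L_opt *v ?y) = (\<Sum>l\<in>I. (u l \<bullet> ?y) * (?y \<bullet> w l))"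
    unfolding w_def by (rule inner_alignment_mult[OF L_opt(1)])
  also have "\<dots> = (\<Sum>l\<in>I. (u l \<bullet> x) * (u l \<bullet> ?y))"
    by (intro sum.cong refl) (simp add: inner_commute[of ?y] inner_w_L_opt)
  also have "\<dots> = P x \<bullet> (L_opt *v x)"
    by (simp add: dyad_sum_def inner_sum_left)
  finally have "?y \<bullet> (L_opt *v ?y) = P x \<bullet> (L_opt *v x)" .
  moreover have "0 \<le> ?y \<bullet> (L_opt *v ?y)"
  proof (cases "?y = 0")
    case False
    have "0 \<le> (?y /\<^sub>R norm ?y) \<bullet> (L_opt *v (?y /\<^sub>R norm ?y))"
      using False L_opt_in_span[of x]
      by (intro inner_L_opt_nonneg) (simp_all add: linear_cmul[OF dyad_sum_linear])
    then show ?thesis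
      using False by (simp add: matrix_vector_mult_scaleR zero_le_mult_iff)
  qed simp
  ultimately show ?thesis by simp
qed

lemma L_opt_form_cauchy_schwarz: "(P x \<bullet> (L_opt *v y))\<^sup>2 \<le> (P x \<bullet> (L_opt *v x)) * (P y \<bullet> (L_opt *v y))"
proof (rule discriminant_le_if_nonneg)
  fix t :: real
  have "P (x + t *\<^sub>R y) \<bullet> (L_opt *v (x + t *\<^sub>R y))
      = P x \<bullet> (L_opt *v x) + 2 * t * (P x \<bullet> (L_opt *v y)) + t\<^sup>2 * (P y \<bullet> (L_opt *v y))"
    using L_opt_form_symmetric[of y x]
    by (simp add: linear_add[OF dyad_sum_linear] linear_cmul[OF dyad_sum_linear]
        matrix_vector_right_distrib matrix_vector_mult_scaleR inner_add_left inner_add_right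
        power2_eq_square algebra_simps)
  then show "0 \<le> P x \<bullet> (L_opt *v x) + 2 * t * (P x \<bullet> (L_opt *v y)) + t\<^sup>2 * (P y \<bullet> (L_opt *v y))"
    using L_opt_form_nonneg[of "x + t *\<^sub>R y"] by simp
qed (rule L_opt_form_nonneg)

lemma norm_L_opt:
  assumes "P x = x"
  shows "norm (L_opt *v x) = norm x"
proof -
  have "(norm (L_opt *v x))\<^sup>2 = (norm x)\<^sup>2"
    using norm_dyad_sum_sq[OF w_orthonormal finite_I, of "\<lambda>_. 1" u x]
      norm_dyad_sum_sq[OF u finite_I, of "\<lambda>_. 1" u x] assms
    by (simp add: L_opt_mult)
  then show ?thesis by (simp add: power2_eq_iff_nonneg)
qed

text \<open>On \<open>span u\<close>, \<open>T = P L_opt\<close> is symmetric with \<open>0 \<le> T \<le> 1\<close>, hence \<open>T\<^sup>2 \<le> T\<close>.\<close>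
lemma norm_proj_L_opt_le:
  assumes x: "P x = x"
  shows "(norm (P (L_opt *v x)))\<^sup>2 \<le> x \<bullet> P (L_opt *v x)"
proof -
  define a where "a = P (L_opt *v x)"
  have Pa: "P a = a" unfolding a_def by (rule orth_proj_idem[OF u finite_I])
  have xa: "P x \<bullet> (L_opt *v a) = (norm a)\<^sup>2"
    unfolding L_opt_form_symmetric[of x] Pa
    using orth_proj_inner_self[OF u finite_I, of "L_opt *v x"]
    by (simp add: a_def orth_proj_adjoint inner_commute)
  have "P a \<bullet> (L_opt *v a) \<le> norm a * norm (L_opt *v a)"
    unfolding Pa by (rule norm_cauchy_schwarz)
  also have "\<dots> \<le> (norm a)\<^sup>2"
    using mult_left_mono[OF norm_alignment_le[OF L_opt(1)] norm_ge_zero] by (simp add: power2_eq_square)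
  finally have aa: "P a \<bullet> (L_opt *v a) \<le> (norm a)\<^sup>2" .
  have xx: "0 \<le> P x \<bullet> (L_opt *v x)" by (rule L_opt_form_nonneg)
  have "(norm a)\<^sup>2 * (norm a)\<^sup>2 \<le> (P x \<bullet> (L_opt *v x)) * (norm a)\<^sup>2"
    using L_opt_form_cauchy_schwarz[of x a] mult_left_mono[OF aa xx]
    by (simp add: xa power2_eq_square)
  then have "(norm a)\<^sup>2 \<le> P x \<bullet> (L_opt *v x)"
    using xx by (cases "a = 0") (simp, erule mult_right_le_imp_le, simp)
  also have "\<dots> = x \<bullet> a"
    unfolding a_def orth_proj_adjoint[symmetric] x ..
  finally show ?thesis unfolding a_def .
qed

lemma norm_diff_proj_L_opt_le:
  assumes x: "P x = x"
  shows "norm (x - P (L_opt *v x)) \<le> norm (L_opt *v x - P (L_opt *v x))"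
proof (rule power2_le_imp_le)
  let ?a = "P (L_opt *v x)"
  have "(norm (x - ?a))\<^sup>2 = (norm x)\<^sup>2 - 2 * (x \<bullet> ?a) + (norm ?a)\<^sup>2"
    by (simp add: power2_norm_eq_inner inner_diff_left inner_diff_right inner_commute)
  also have "\<dots> \<le> (norm (L_opt *v x))\<^sup>2 - (norm ?a)\<^sup>2"
    using norm_proj_L_opt_le[OF x] norm_L_opt[OF x] by simp
  also have "\<dots> = (norm (L_opt *v x - ?a))\<^sup>2"
    using orth_proj_pythagoras[OF u finite_I, of "L_opt *v x"]
      norm_dyad_sum_sq[OF u finite_I, of "\<lambda>_. 1" u "L_opt *v x"]
    by simp
  finally show "(norm (x - ?a))\<^sup>2 \<le> (norm (L_opt *v x - ?a))\<^sup>2" .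
qed simp

end

text \<open>
  An orthonormal basis \<open>w\<close> of \<open>span v\<close> aligned with \<open>u\<close>: the last condition is what the
  symmetry and positivity of \<open>[u a \<bullet> w b]\<close> provide.\<close>
definition aligned_basis :: "nat set \<Rightarrow> (nat \<Rightarrow> real^'n) \<Rightarrow> (nat \<Rightarrow> real^'n) \<Rightarrow> (nat \<Rightarrow> real^'n) \<Rightarrow> bool" where
  "aligned_basis I u v w \<longleftrightarrow>
     orthonormal_on I w \<and> (\<forall>l\<in>I. orth_proj I v (w l) = w l) \<and>
     (\<forall>x. orth_proj I u x = x \<longrightarrow>
        norm (x - orth_proj I u (dyad_sum I (\<lambda>_. 1) w u x))
          \<le> norm (dyad_sum I (\<lambda>_. 1) w u x - orth_proj I u (dyad_sum I (\<lambda>_. 1) w u x)))"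

lemma procrustes_alignment:
  fixes u v :: "nat \<Rightarrow> real^'n"
  assumes "finite I" "orthonormal_on I u" "orthonormal_on I v"
  shows "\<exists>w. aligned_basis I u v w"
proof -
  interpret procrustes I u v by unfold_locales (rule assms)+
  have "aligned_basis I u v w"
    using w_orthonormal w_in_span norm_diff_proj_L_opt_le by (simp add: aligned_basis_def L_opt_mult)
  then show ?thesis by blast
qed

section \<open>Perturbation of a singular subspace\<close>

lemma row_bound_coefficients:
  fixes X e D P G :: real
  assumes P: "0 \<le> P" and e: "0 \<le> e" and D: "0 < D" and X: "0 \<le> X" "X \<le> 2 * sqrt 2 * e / D"
  shows "2 * X * P + 2 / D * e * P + 2 / D * G + 2 / D * e * X
           \<le> 2 / D * G + 4 * (1 + sqrt 2) / D * P * e + 8 / D\<^sup>2 * e\<^sup>2"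
proof -
  have "sqrt 2 \<le> 2" by (rule real_le_lsqrt) simp_all
  have "2 * X * P \<le> 2 * (2 * sqrt 2 * e / D) * P"
    using X P by (intro mult_right_mono) simp_all
  moreover have "2 / D * e * X \<le> 2 / D * e * (2 * sqrt 2 * e / D)"
    using X e D by (intro mult_left_mono) simp_all
  moreover have "2 / D * e * (2 * sqrt 2 * e / D) = sqrt 2 * (4 * e\<^sup>2 / D\<^sup>2)"
    by (simp add: power2_eq_square field_simps)
  moreover have "sqrt 2 * (4 * e\<^sup>2 / D\<^sup>2) \<le> 2 * (4 * e\<^sup>2 / D\<^sup>2)"
    using \<open>sqrt 2 \<le> 2\<close> by (rule mult_right_mono) simp
  moreover have "2 * (4 * e\<^sup>2 / D\<^sup>2) = 8 / D\<^sup>2 * e\<^sup>2" by simp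
  moreover have "2 * (2 * sqrt 2 * e / D) * P + 2 / D * e * P \<le> 4 * (1 + sqrt 2) / D * P * e"
    using P e D by (simp add: field_simps mult_nonneg_nonneg)
  ultimately show ?thesis by linarith
qed

locale svd_perturbation =
  fixes Q Qh :: "real^'p^'p"
    and r s t :: nat
    and \<sigma> \<sigma>h :: "nat \<Rightarrow> real"
    and g h gh hh :: "nat \<Rightarrow> real^'p"
  assumes svd_Q: "is_svd Q r \<sigma> g h"
    and svd_Qh: "is_svd Qh CARD('p) \<sigma>h gh hh"
    and st: "1 \<le> s" "s \<le> t" "t \<le> r"
    and Delta_pos: "0 < gapDelta \<sigma> r s t"
    and pert: "spec_norm (Qh - Q) \<le> gapDelta \<sigma> r s t / 2"
begin

abbreviation "S \<equiv> {s..t}"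
abbreviation "E \<equiv> Qh - Q"
abbreviation "\<epsilon> \<equiv> spec_norm E"
abbreviation "\<Delta> \<equiv> gapDelta \<sigma> r s t"

lemma S_subset: "S \<subseteq> {1..r}" "S \<subseteq> {1..CARD('p)}"
  using st is_svd_le_card[OF svd_Q] by auto

lemma orthonormal_S: "orthonormal_on S g" "orthonormal_on S h" "orthonormal_on S gh" "orthonormal_on S hh"
  using is_svdD(1,2)[OF svd_Q] is_svdD(1,2)[OF svd_Qh] S_subset by (auto elim: orthonormal_on_subset)

lemma gap_above:
  assumes "i \<in> {1..r}" "i < s"
  shows "\<sigma> s + \<Delta> \<le> \<sigma> i"
proof -
  have "\<Delta> \<le> \<sigma> (s - 1) - \<sigma> s" using assms st by (auto simp: gapDelta_def Let_def)
  moreover have "\<sigma> (s - 1) \<le> \<sigma> i" using is_svdD(4)[OF svd_Q, of i "s - 1"] assms st by auto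
  ultimately show ?thesis by simp
qed

lemma gap_below:
  assumes "i \<in> {1..r}" "t < i"
  shows "\<sigma> i \<le> \<sigma> t - \<Delta>"
proof -
  have "\<Delta> \<le> \<sigma> t - \<sigma> (t + 1)" using assms st by (auto simp: gapDelta_def Let_def)
  moreover have "\<sigma> i \<le> \<sigma> (t + 1)" using is_svdD(4)[OF svd_Q, of "t + 1" i] assms st by auto
  ultimately show ?thesis by simp
qed

lemma Delta_le: "\<Delta> \<le> \<sigma> t"
  using st by (auto simp: gapDelta_def Let_def)

lemma weyl_t: "\<sigma> t \<le> \<sigma>h t + \<epsilon>"
  using weyl_singular_value_le[OF svd_Q svd_Qh, of t] st is_svd_le_card[OF svd_Q]
  by (simp add: spec_norm_minus_commute)

lemma weyl_s: "\<sigma>h s \<le> \<sigma> s + \<epsilon>"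
  using weyl_singular_value_le[OF svd_Qh svd_Q, of s] st is_svd_le_card[OF svd_Q] by simp

text \<open>
  The perturbed singular values \<open>\<sigma>h l\<close>, \<open>l \<in> S\<close>, lie in the interval of centre \<open>\<gamma>\<close> and radius
  \<open>\<rho>\<close>, and all other unperturbed singular values keep the distance \<open>\<rho> + \<delta>\<close> from \<open>\<gamma>\<close>.\<close>
definition "\<gamma> = (\<sigma>h s + \<sigma>h t) / 2"
definition "\<rho> = (\<sigma>h s - \<sigma>h t) / 2"
definition "\<delta> = \<Delta> - \<epsilon>"

lemma sigh_S_bounds: "l \<in> S \<Longrightarrow> \<sigma>h t \<le> \<sigma>h l \<and> \<sigma>h l \<le> \<sigma>h s"
  using S_subset is_svdD(4)[OF svd_Qh, of s l] is_svdD(4)[OF svd_Qh, of l t] by auto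

lemma rho_nonneg: "0 \<le> \<rho>"
  using sigh_S_bounds[of s] st unfolding \<rho>_def by simp

lemma delta_ge: "\<Delta> / 2 \<le> \<delta>"
  using pert unfolding \<delta>_def by simp

lemma delta_pos: "0 < \<delta>"
  using delta_ge Delta_pos by simp

lemma sigh_S_ge: "l \<in> S \<Longrightarrow> \<Delta> / 2 \<le> \<sigma>h l"
  using sigh_S_bounds[of l] weyl_t Delta_le pert by fastforce

lemma gamma_ge: "\<rho> + \<delta> \<le> \<gamma>"
  using weyl_t Delta_le unfolding \<gamma>_def \<rho>_def \<delta>_def by argo

lemma sigh_S_near_gamma: "l \<in> S \<Longrightarrow> \<bar>\<sigma>h l - \<gamma>\<bar> \<le> \<rho>"
  using sigh_S_bounds[of l] unfolding \<gamma>_def \<rho>_def abs_le_iff by argo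

lemma sigma_far_from_gamma:
  assumes "i \<in> {1..r}" "i \<notin> S"
  shows "\<rho> + \<delta> \<le> \<bar>\<sigma> i - \<gamma>\<bar>"
proof (cases "i < s")
  case True
  with gap_above[OF assms(1)] weyl_s show ?thesis unfolding \<gamma>_def \<rho>_def \<delta>_def by argo
next
  case False
  with assms have "t < i" by auto
  with gap_below[OF assms(1)] weyl_t show ?thesis unfolding \<gamma>_def \<rho>_def \<delta>_def by argo
qed

text \<open>
  \<open>Yh x\<close> = (Gh_S c, Hh_S c) with \<open>c = Hh_S^T x\<close> ranges over the span of the singular pairs of
  \<open>Qh\<close> with index in \<open>S\<close>, an invariant subspace of the dilation of \<open>Qh\<close> on which it acts as
  \<open>\<gamma> + \<Lambda>\<close>.\<close>
definition "Yh x = (dyad_sum S (\<lambda>_. 1) gh hh x, orth_proj S hh x)"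
definition "\<Lambda> x = dyad_sum S (\<lambda>m. \<sigma>h m - \<gamma>) hh hh x"
definition "Z x = pair_residual S g h (Yh x)"

lemma Yh_linear: "linear Yh"
  by (rule linearI) (simp_all add: Yh_def linear_add[OF dyad_sum_linear] linear_cmul[OF dyad_sum_linear])

lemma Z_linear: "linear Z"
  using linear_compose[OF Yh_linear pair_residual_linear] by (simp add: Z_def[abs_def] o_def)

lemma norm_Yh_le: "norm (Yh x) \<le> sqrt 2 * norm x"
proof (rule power2_le_imp_le)
  have "norm (dyad_sum S (\<lambda>_. 1) gh hh x) \<le> norm x" "norm (orth_proj S hh x) \<le> norm x"
    using norm_dyad_sum_le[OF orthonormal_S(3,4), of "\<lambda>_. 1" 1]
      norm_dyad_sum_le[OF orthonormal_S(4,4), of "\<lambda>_. 1" 1] by simp_all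
  then have "(norm (dyad_sum S (\<lambda>_. 1) gh hh x))\<^sup>2 \<le> (norm x)\<^sup>2" "(norm (orth_proj S hh x))\<^sup>2 \<le> (norm x)\<^sup>2"
    by (simp_all add: power_mono)
  moreover have "(norm (Yh x))\<^sup>2 = (norm (dyad_sum S (\<lambda>_. 1) gh hh x))\<^sup>2 + (norm (orth_proj S hh x))\<^sup>2"
    by (simp add: Yh_def power2_norm_prod)
  moreover have "(sqrt 2 * norm x)\<^sup>2 = 2 * (norm x)\<^sup>2" by (simp add: power_mult_distrib)
  ultimately show "(norm (Yh x))\<^sup>2 \<le> (sqrt 2 * norm x)\<^sup>2" by linarith
qed simp

lemma norm_Lambda_le: "norm (\<Lambda> x) \<le> \<rho> * norm x"
  unfolding \<Lambda>_def
  by (rule norm_dyad_sum_le[OF orthonormal_S(4,4)]) (simp_all add: sigh_S_near_gamma rho_nonneg)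

lemma dilation_Qh_Yh: "dilation Qh (Yh x) = Yh (\<Lambda> x) + \<gamma> *\<^sub>R Yh x"
proof -
  have fin: "finite {1..CARD('p)}" by simp
  have "Qh *v orth_proj S hh x = dyad_sum S \<sigma>h gh hh x"
    using dyad_sum_comp[OF is_svdD(2)[OF svd_Qh] S_subset(2) fin, of \<sigma>h gh "\<lambda>_. 1" hh x]
    by (simp add: is_svd_mult[OF svd_Qh])
  moreover have "dyad_sum S (\<lambda>_. 1) gh hh x v* Qh = dyad_sum S \<sigma>h hh hh x"
    using dyad_sum_comp[OF is_svdD(1)[OF svd_Qh] S_subset(2) fin, of \<sigma>h hh "\<lambda>_. 1" hh x]
    by (simp add: is_svd_vector_mult[OF svd_Qh])
  moreover have "dyad_sum S (\<lambda>_. 1) u hh (\<Lambda> x) = dyad_sum S (\<lambda>m. \<sigma>h m - \<gamma>) u hh x" for u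
    using dyad_sum_comp[OF orthonormal_S(4) order_refl finite_atLeastAtMost, of "\<lambda>_. 1" u "\<lambda>m. \<sigma>h m - \<gamma>" hh x]
    by (simp add: \<Lambda>_def)
  ultimately show ?thesis
    by (simp add: dilation_def Yh_def dyad_sum_coeff_add dyad_sum_coeff_scale)
qed

lemma Z_sylvester_step: "(\<rho> + \<delta>) * norm (Z x) \<le> norm (Z (\<Lambda> x)) + sqrt 2 * \<epsilon> * norm x"
proof -
  have "(\<rho> + \<delta>) * norm (Z x) \<le> norm (dilation Q (Z x) - \<gamma> *\<^sub>R Z x)"
    unfolding Z_def
    by (rule dilation_shift_lower_bound[OF svd_Q S_subset(1)])
       (use rho_nonneg delta_pos gamma_ge sigma_far_from_gamma
         pair_residual_orthogonal[OF orthonormal_S(1,2)] in auto)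
  also have "dilation Q (Z x) - \<gamma> *\<^sub>R Z x = Z (\<Lambda> x) - pair_residual S g h (dilation E (Yh x))"
    unfolding Z_def dilation_pair_residual[OF svd_Q S_subset(1)]
    by (simp add: dilation_diff dilation_Qh_Yh linear_diff[OF pair_residual_linear]
        linear_add[OF pair_residual_linear] linear_cmul[OF pair_residual_linear])
  also have "norm \<dots> \<le> norm (Z (\<Lambda> x)) + norm (dilation E (Yh x))"
    by (rule order_trans[OF norm_triangle_ineq4 add_left_mono])
       (rule norm_pair_residual_le[OF orthonormal_S(1,2)], simp)
  also have "\<dots> \<le> norm (Z (\<Lambda> x)) + \<epsilon> * (sqrt 2 * norm x)"
    by (intro add_left_mono order_trans[OF norm_dilation_le] mult_left_mono norm_Yh_le spec_norm_nonneg)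
  finally show ?thesis by (simp add: mult_ac)
qed

lemma davis_kahan_bound: "norm (Z x) \<le> sqrt 2 * \<epsilon> / \<delta> * norm x"
  by (rule sylvester_bound[OF linear_conv_bounded_linear[THEN iffD1, OF Z_linear]
        rho_nonneg delta_pos norm_Lambda_le Z_sylvester_step])

lemma sin_theta_right:
  "norm (orth_proj S hh x - orth_proj S h (orth_proj S hh x)) \<le> sqrt 2 * \<epsilon> / \<delta> * norm x"
  using snd_pair_residual_bound[OF orthonormal_S(1,2), of "Yh x"] davis_kahan_bound[of x]
  by (simp add: Z_def Yh_def)

lemma sin_theta_left:
  "norm (dyad_sum S (\<lambda>_. 1) gh hh x - orth_proj S g (dyad_sum S (\<lambda>_. 1) gh hh x))
     \<le> sqrt 2 * \<epsilon> / \<delta> * norm x"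
  using fst_pair_residual_bound[OF orthonormal_S(1,2), of "Yh x"] davis_kahan_bound[of x]
  by (simp add: Z_def Yh_def)

lemma sigh_S_pos: "l \<in> S \<Longrightarrow> 0 < \<sigma>h l"
  using sigh_S_ge[of l] Delta_pos by linarith

text \<open>\<open>Gh = Gh_S \<Sigma>h_S\<^sup>-\<^sup>1 Hh_S\<^sup>T\<close> inverts \<open>Qh\<^sup>T\<close> on the span of \<open>hh l\<close>, \<open>l \<in> S\<close>.\<close>
definition Gh :: "real^'p \<Rightarrow> real^'p" where
  "Gh x = dyad_sum S (\<lambda>m. 1 / \<sigma>h m) gh hh x"

lemma Qh_inner_Gh:
  assumes x: "orth_proj S hh x = x"
  shows "(Qh *v a) \<bullet> Gh x = a \<bullet> x"
proof -
  have "Gh x v* Qh = dyad_sum S (\<lambda>m. \<sigma>h m * (1 / \<sigma>h m)) hh hh x"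
    unfolding Gh_def is_svd_vector_mult[OF svd_Qh]
    by (rule dyad_sum_comp[OF is_svdD(1)[OF svd_Qh] S_subset(2)]) simp
  also have "\<dots> = orth_proj S hh x"
    unfolding dyad_sum_def by (intro sum.cong refl) (use sigh_S_pos in force)
  also have "\<dots> = x" by (rule x)
  finally have "Gh x v* Qh = x" .
  then show ?thesis using dot_lmul_matrix[of "Gh x" Qh a] by (simp add: inner_commute)
qed

lemma norm_Gh_le: "norm (Gh x) \<le> 2 / \<Delta> * norm x"
  unfolding Gh_def
proof (rule norm_dyad_sum_le[OF orthonormal_S(3,4) finite_atLeastAtMost])
  fix m assume "m \<in> S"
  then show "\<bar>1 / \<sigma>h m\<bar> \<le> 2 / \<Delta>"
    using sigh_S_ge[of m] sigh_S_pos[of m] Delta_pos by (simp add: field_simps)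
qed (use Delta_pos in simp)

lemma sin_theta_Gh: "norm (Gh x - orth_proj S g (Gh x)) \<le> sqrt 2 * \<epsilon> / \<delta> * norm (Gh x)"
proof -
  define y where "y = dyad_sum S (\<lambda>m. 1 / \<sigma>h m) hh hh x"
  have "Gh x = dyad_sum S (\<lambda>_. 1) gh hh y"
    unfolding y_def Gh_def
    by (subst dyad_sum_comp[OF orthonormal_S(4) order_refl finite_atLeastAtMost]) simp
  moreover have "(norm y)\<^sup>2 = (norm (Gh x))\<^sup>2"
    using norm_dyad_sum_sq[OF orthonormal_S(4) finite_atLeastAtMost, of "\<lambda>m. 1 / \<sigma>h m" hh x]
      norm_dyad_sum_sq[OF orthonormal_S(3) finite_atLeastAtMost, of "\<lambda>m. 1 / \<sigma>h m" hh x]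
    by (simp add: y_def Gh_def)
  then have "norm y = norm (Gh x)" by (simp add: power2_eq_iff_nonneg)
  ultimately show ?thesis using sin_theta_left[of y] by simp
qed

definition row_proj :: "'p \<Rightarrow> real^'p" where
  "row_proj j = orth_proj {1..r} h (axis j 1)"

lemma norm_row_proj: "norm (row_proj j) = L2_set (\<lambda>i. h i $ j) {1..r}"
  unfolding row_proj_def norm_orth_proj[OF is_svdD(2)[OF svd_Q] finite_atLeastAtMost]
  by (simp add: inner_axis)

lemma Q_row_proj: "Q *v row_proj j = Q *v axis j 1"
  unfolding row_proj_def is_svd_mult[OF svd_Q]
  by (subst dyad_sum_comp[OF is_svdD(2)[OF svd_Q] order_refl finite_atLeastAtMost]) simp

text \<open>Splitting \<open>Qh = Q + E\<close> in \<open>x\<^sub>j = \<langle>Qh e\<^sub>j, Gh x\<rangle>\<close>.\<close>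
lemma row_identity:
  assumes x: "orth_proj S hh x = x"
  shows "x $ j = row_proj j \<bullet> x - (E *v row_proj j) \<bullet> Gh x + (E *v axis j 1) \<bullet> Gh x"
proof -
  have "x $ j = (Qh *v axis j 1) \<bullet> Gh x"
    by (simp add: Qh_inner_Gh[OF x] inner_axis')
  also have "\<dots> = (Q *v row_proj j) \<bullet> Gh x + (E *v axis j 1) \<bullet> Gh x"
    by (simp add: Q_row_proj matrix_vector_mult_diff_rdistrib inner_diff_left)
  also have "Q *v row_proj j = Qh *v row_proj j - E *v row_proj j"
    by (simp add: matrix_vector_mult_diff_rdistrib)
  finally show ?thesis by (simp add: inner_diff_left Qh_inner_Gh[OF x])
qed

lemma inner_Gh_le:
  "z \<bullet> Gh y \<le> (norm (orth_proj S g z) + norm z * (sqrt 2 * \<epsilon> / \<delta>)) * norm (Gh y)"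
proof -
  have "z \<bullet> Gh y = orth_proj S g z \<bullet> Gh y + z \<bullet> (Gh y - orth_proj S g (Gh y))"
    by (simp add: inner_diff_right orth_proj_adjoint)
  also have "\<dots> \<le> norm (orth_proj S g z) * norm (Gh y) + norm z * (sqrt 2 * \<epsilon> / \<delta> * norm (Gh y))"
    by (intro add_mono order_trans[OF norm_cauchy_schwarz] mult_left_mono sin_theta_Gh) simp_all
  finally show ?thesis by (simp add: algebra_simps)
qed

lemma sin_theta_const_le: "sqrt 2 * \<epsilon> / \<delta> \<le> 2 * sqrt 2 * \<epsilon> / \<Delta>"
proof -
  have "1 / \<delta> \<le> 2 / \<Delta>" using delta_ge delta_pos Delta_pos by (simp add: field_simps)
  then show ?thesis
    using mult_left_mono[of "1 / \<delta>" "2 / \<Delta>" "sqrt 2 * \<epsilon>"] spec_norm_nonneg[of E]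
    by (simp add: ac_simps)
qed

lemma inner_E_axis_Gh_le:
  "(E *v axis j 1) \<bullet> Gh y
     \<le> (L2_set (\<lambda>l. g l \<bullet> (E *v axis j 1)) S + \<epsilon> * (sqrt 2 * \<epsilon> / \<delta>)) * norm (Gh y)"
proof -
  let ?z = "E *v axis j 1" and ?X = "sqrt 2 * \<epsilon> / \<delta>"
  have "norm ?z * ?X \<le> \<epsilon> * ?X"
    using norm_mult_le_spec_norm[of E "axis j 1"] spec_norm_nonneg[of E] delta_pos
    by (intro mult_right_mono) simp_all
  then have "(norm (orth_proj S g ?z) + norm ?z * ?X) * norm (Gh y)
      \<le> (L2_set (\<lambda>l. g l \<bullet> ?z) S + \<epsilon> * ?X) * norm (Gh y)"
    by (intro mult_right_mono) (simp_all add: norm_orth_proj[OF orthonormal_S(1) finite_atLeastAtMost])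
  with inner_Gh_le[of ?z y] show ?thesis by linarith
qed

lemma h_sum_in_span:
  "orth_proj S h (\<Sum>l\<in>S. a l *\<^sub>R h l) = (\<Sum>l\<in>S. a l *\<^sub>R h l)"
  "orth_proj {1..r} h (\<Sum>l\<in>S. a l *\<^sub>R h l) = (\<Sum>l\<in>S. a l *\<^sub>R h l)"
  using dyad_sum_sum[OF orthonormal_S(2) order_refl finite_atLeastAtMost, of "\<lambda>_. 1" h a]
    dyad_sum_sum[OF is_svdD(2)[OF svd_Q] S_subset(1) finite_atLeastAtMost, of "\<lambda>_. 1" h a]
  by simp_all

lemma norm_h_sum: "norm (\<Sum>l\<in>S. a l *\<^sub>R h l) = L2_set a S"
  using orthonormal_on_norm_sum[OF orthonormal_S(2) finite_atLeastAtMost, of a]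
  by (simp add: L2_set_def real_sqrt_unique)

context
  fixes w :: "nat \<Rightarrow> real^'p"
  assumes aligned: "aligned_basis S h hh w"
begin

lemma w_orthonormal: "orthonormal_on S w"
  and w_in_span: "l \<in> S \<Longrightarrow> orth_proj S hh (w l) = w l"
  and w_aligned: "orth_proj S h x = x \<Longrightarrow>
      norm (x - orth_proj S h (dyad_sum S (\<lambda>_. 1) w h x))
        \<le> norm (dyad_sum S (\<lambda>_. 1) w h x - orth_proj S h (dyad_sum S (\<lambda>_. 1) w h x))"
  using aligned unfolding aligned_basis_def by blast+

abbreviation "W \<equiv> dyad_sum S (\<lambda>_. 1) w h"

lemma W_in_span: "orth_proj S hh (W x) = W x"
  unfolding dyad_sum_def[of S _ w h]
  by (simp add: linear_sum[OF dyad_sum_linear] linear_cmul[OF dyad_sum_linear] w_in_span)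

lemma norm_W:
  assumes "orth_proj S h x = x"
  shows "norm (W x) = norm x"
proof -
  have "(norm (W x))\<^sup>2 = (norm x)\<^sup>2"
    using norm_dyad_sum_sq[OF w_orthonormal finite_atLeastAtMost, of "\<lambda>_. 1" h x]
      norm_dyad_sum_sq[OF orthonormal_S(2) finite_atLeastAtMost, of "\<lambda>_. 1" h x] assms
    by simp
  then show ?thesis by (simp add: power2_eq_iff_nonneg)
qed

lemma norm_W_diff_le:
  assumes x: "orth_proj S h x = x"
  shows "norm (W x - x) \<le> 2 * (sqrt 2 * \<epsilon> / \<delta>) * norm x"
proof -
  have "norm (W x - orth_proj S h (W x)) \<le> sqrt 2 * \<epsilon> / \<delta> * norm x"
    using sin_theta_right[of "W x"] by (simp add: W_in_span norm_W[OF x])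
  moreover have "norm (W x - x) \<le> norm (W x - orth_proj S h (W x)) + norm (x - orth_proj S h (W x))"
    using norm_triangle_ineq4[of "W x - orth_proj S h (W x)" "x - orth_proj S h (W x)"] by simp
  ultimately show ?thesis using w_aligned[OF x] by simp
qed

lemma row_error_identity:
  fixes j :: 'p
  defines "v \<equiv> \<Sum>l\<in>S. (w l $ j - h l $ j) *\<^sub>R h l"
  shows "(\<Sum>l\<in>S. (w l $ j - h l $ j)\<^sup>2)
    = row_proj j \<bullet> (W v - v) + - ((E *v row_proj j) \<bullet> Gh (W v)) + (E *v axis j 1) \<bullet> Gh (W v)"
proof -
  have "W v = (\<Sum>l\<in>S. (w l $ j - h l $ j) *\<^sub>R w l)"
    using dyad_sum_sum[OF orthonormal_S(2) order_refl finite_atLeastAtMost, of "\<lambda>_. 1" w]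
    by (simp add: v_def)
  then have "(\<Sum>l\<in>S. (w l $ j - h l $ j)\<^sup>2) = (W v - v) $ j"
    by (simp add: v_def sum_subtractf power2_eq_square right_diff_distrib)
  also have "\<dots> = row_proj j \<bullet> (W v - v) + - ((E *v row_proj j) \<bullet> Gh (W v)) + (E *v axis j 1) \<bullet> Gh (W v)"
    using row_identity[OF W_in_span, of v j] h_sum_in_span(2)
    by (simp add: v_def inner_diff_right row_proj_def orth_proj_adjoint inner_axis')
  finally show ?thesis .
qed

lemma row_error_sq_le:
  fixes j :: 'p
  defines "a \<equiv> \<lambda>l. w l $ j - h l $ j" and "X \<equiv> sqrt 2 * \<epsilon> / \<delta>"
    and "G \<equiv> L2_set (\<lambda>l. g l \<bullet> (E *v axis j 1)) S" and "p \<equiv> norm (row_proj j)"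
  shows "(\<Sum>l\<in>S. (a l)\<^sup>2) \<le> L2_set a S * (2 * X * p + 2 / \<Delta> * \<epsilon> * p + 2 / \<Delta> * G + 2 / \<Delta> * \<epsilon> * X)"
proof -
  define v where "v = (\<Sum>l\<in>S. a l *\<^sub>R h l)"
  have nG: "norm (Gh (W v)) \<le> 2 / \<Delta> * L2_set a S"
    using norm_Gh_le[of "W v"] by (simp add: v_def norm_W h_sum_in_span norm_h_sum)
  have "(\<Sum>l\<in>S. (a l)\<^sup>2)
      = row_proj j \<bullet> (W v - v) + - ((E *v row_proj j) \<bullet> Gh (W v)) + (E *v axis j 1) \<bullet> Gh (W v)"
    unfolding a_def v_def by (rule row_error_identity)
  also have "\<dots> \<le> p * (2 * X * L2_set a S) + (\<epsilon> * p) * (2 / \<Delta> * L2_set a S)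
      + (G + \<epsilon> * X) * (2 / \<Delta> * L2_set a S)"
  proof (intro add_mono)
    show "row_proj j \<bullet> (W v - v) \<le> p * (2 * X * L2_set a S)"
      unfolding p_def X_def using norm_W_diff_le[of v]
      by (intro order_trans[OF norm_cauchy_schwarz] mult_left_mono)
         (simp_all add: v_def h_sum_in_span norm_h_sum norm_minus_commute)
    show "- ((E *v row_proj j) \<bullet> Gh (W v)) \<le> (\<epsilon> * p) * (2 / \<Delta> * L2_set a S)"
      using norm_cauchy_schwarz[of "- (E *v row_proj j)" "Gh (W v)"]
        mult_mono[OF norm_mult_le_spec_norm[of E "row_proj j"] nG] spec_norm_nonneg[of E]
      by (simp add: p_def)
    have "0 \<le> G + \<epsilon> * X"
      unfolding G_def X_def using spec_norm_nonneg[of E] delta_pos by (simp add: L2_set_nonneg)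
    then show "(E *v axis j 1) \<bullet> Gh (W v) \<le> (G + \<epsilon> * X) * (2 / \<Delta> * L2_set a S)"
      using inner_E_axis_Gh_le[of j "W v"] mult_left_mono[OF nG] unfolding G_def X_def
      by (blast intro: order_trans)
  qed
  finally show ?thesis
    by (simp add: algebra_simps add_divide_distrib)
qed

lemma rotation_orthonormal:
  assumes "l \<in> S" "l' \<in> S"
  shows "(\<Sum>m\<in>S. (hh m \<bullet> w l) * (hh m \<bullet> w l')) = (if l = l' then 1 else 0)"
proof -
  have "(\<Sum>m\<in>S. (hh m \<bullet> w l) * (hh m \<bullet> w l')) = orth_proj S hh (w l) \<bullet> w l'"
    by (simp add: dyad_sum_def inner_sum_left)
  then show ?thesis using w_in_span[OF assms(1)] orthonormal_onD[OF w_orthonormal assms] by simp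
qed

lemma rotation_coords: "l \<in> S \<Longrightarrow> (\<Sum>m\<in>S. hh m $ j * (hh m \<bullet> w l)) = w l $ j"
  using arg_cong[where f = "\<lambda>x. x $ j", OF w_in_span[of l]]
  by (simp add: dyad_sum_def mult.commute)

lemma row_bound:
  "L2_set (\<lambda>l. w l $ j - h l $ j) S
     \<le> 2 / \<Delta> * L2_set (\<lambda>l. g l \<bullet> (E *v axis j 1)) S
       + 4 * (1 + sqrt 2) / \<Delta> * L2_set (\<lambda>i. h i $ j) {1..r} * \<epsilon>
       + 8 / \<Delta>\<^sup>2 * \<epsilon>\<^sup>2" (is "?L \<le> ?B")
proof (rule le_of_sq_le_mult)
  let ?X = "sqrt 2 * \<epsilon> / \<delta>" and ?G = "L2_set (\<lambda>l. g l \<bullet> (E *v axis j 1)) S"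
    and ?p = "norm (row_proj j)"
  have "2 * ?X * ?p + 2 / \<Delta> * \<epsilon> * ?p + 2 / \<Delta> * ?G + 2 / \<Delta> * \<epsilon> * ?X \<le> ?B"
    using row_bound_coefficients[OF norm_ge_zero spec_norm_nonneg Delta_pos _ sin_theta_const_le,
        of "row_proj j" ?G] spec_norm_nonneg[of E] delta_pos
    by (simp add: norm_row_proj)
  then have "(\<Sum>l\<in>S. (w l $ j - h l $ j)\<^sup>2) \<le> ?L * ?B"
    using row_error_sq_le[of j] mult_left_mono[OF _ L2_set_nonneg] by (blast intro: order_trans)
  then show "?L\<^sup>2 \<le> ?B * ?L" by (simp add: L2_set_def mult.commute sum_nonneg)
  show "0 \<le> ?B"
    using Delta_pos spec_norm_nonneg[of E]
    by (intro add_nonneg_nonneg mult_nonneg_nonneg divide_nonneg_pos L2_set_nonneg) simp_all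
qed (rule L2_set_nonneg)

end

end

theorem mainTheorem8:
  fixes Q Qh :: "real^'p^'p"
    and r s t :: nat
    and \<sigma> \<sigma>h :: "nat \<Rightarrow> real"
    and g h gh hh :: "nat \<Rightarrow> real^'p"
  assumes rank_Q: "rank Q = r"
    and svd_Q: "Q = (\<Sum>i=1..r. \<sigma> i *\<^sub>R outer (g i) (h i))"
    and sig_pos: "\<forall>i\<in>{1..r}. \<sigma> i > 0"
    and sig_mono: "\<forall>i\<in>{1..r}. \<forall>k\<in>{1..r}. i \<le> k \<longrightarrow> \<sigma> k \<le> \<sigma> i"
    and g_on: "orthonormal_on {1..r} g"
    and h_on: "orthonormal_on {1..r} h"
    and svd_Qh: "Qh = (\<Sum>i=1..CARD('p). \<sigma>h i *\<^sub>R outer (gh i) (hh i))"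
    and sigh_nonneg: "\<forall>i\<in>{1..CARD('p)}. \<sigma>h i \<ge> 0"
    and sigh_mono: "\<forall>i\<in>{1..CARD('p)}. \<forall>k\<in>{1..CARD('p)}. i \<le> k \<longrightarrow> \<sigma>h k \<le> \<sigma>h i"
    and gh_on: "orthonormal_on {1..CARD('p)} gh"
    and hh_on: "orthonormal_on {1..CARD('p)} hh"
    and st: "1 \<le> s" "s \<le> t" "t \<le> r"
    and Delta_pos: "gapDelta \<sigma> r s t > 0"
    and pert: "spec_norm (Qh - Q) \<le> gapDelta \<sigma> r s t / 2"
  shows "\<exists>\<Omega> :: nat \<Rightarrow> nat \<Rightarrow> real.
           (\<forall>l\<in>{s..t}. \<forall>l'\<in>{s..t}. (\<Sum>m=s..t. \<Omega> m l * \<Omega> m l') = (if l = l' then 1 else 0)) \<and>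
           (\<forall>j::'p.
              L2_set (\<lambda>l. (\<Sum>m=s..t. hh m $ j * \<Omega> m l) - h l $ j) {s..t}
              \<le> 2 / gapDelta \<sigma> r s t * L2_set (\<lambda>l. g l \<bullet> ((Qh - Q) *v axis j 1)) {s..t}
                + 4 * (1 + sqrt 2) / gapDelta \<sigma> r s t * L2_set (\<lambda>i. h i $ j) {1..r} * spec_norm (Qh - Q)
                + 8 / (gapDelta \<sigma> r s t)\<^sup>2 * (spec_norm (Qh - Q))\<^sup>2)"
proof -
  have "is_svd Q r \<sigma> g h" "is_svd Qh CARD('p) \<sigma>h gh hh"
    using assms by (auto simp: is_svd_def less_imp_le)
  then interpret svd_perturbation Q Qh r s t \<sigma> \<sigma>h g h gh hh
    using st Delta_pos pert by unfold_locales
  obtain w where w: "aligned_basis S h hh w"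
    using procrustes_alignment[OF finite_atLeastAtMost orthonormal_S(2,4)] by blast
  show ?thesis
  proof (intro exI[of _ "\<lambda>m l. hh m \<bullet> w l"] conjI ballI allI)
    show "(\<Sum>m\<in>S. (hh m \<bullet> w l) * (hh m \<bullet> w l')) = (if l = l' then 1 else 0)"
      if "l \<in> S" "l' \<in> S" for l l'
      using rotation_orthonormal[OF w that] .
    fix j :: 'p
    have "L2_set (\<lambda>l. (\<Sum>m\<in>S. hh m $ j * (hh m \<bullet> w l)) - h l $ j) S = L2_set (\<lambda>l. w l $ j - h l $ j) S"
      by (rule L2_set_cong) (simp_all add: rotation_coords[OF w])
    with row_bound[OF w, of j]
    show "L2_set (\<lambda>l. (\<Sum>m\<in>S. hh m $ j * (hh m \<bullet> w l)) - h l $ j) S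
        \<le> 2 / \<Delta> * L2_set (\<lambda>l. g l \<bullet> (E *v axis j 1)) S
          + 4 * (1 + sqrt 2) / \<Delta> * L2_set (\<lambda>i. h i $ j) {1..r} * \<epsilon> + 8 / \<Delta>\<^sup>2 * \<epsilon>\<^sup>2" by simp
  qed
qed

end
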